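(* Let $\alpha,\beta>0$, $\gamma\ge 0$, and let $(u,f)$ be a least-energy solution, i.e. $(u,f)\in X$ minimizes $I$ over $X$ and solves $$u''=\frac{\alpha\beta}{2}f^{2}u+\frac{u(u^{2}-1)}{r^{2}},\qquad f''=-\frac{2}{r}f'+\frac{\beta}{r^{2}}fu^{2}+\gamma f(f^{2}-1),\qquad r>0.$$ Then $0<u(r)<1$ and $0<f(r)<1$ for all $r>0$, and for every $\varepsilon\in(0,1)$: $$u(r)=O\Big(e^{-\sqrt{\frac{\alpha\beta}{2}}(1-\varepsilon)r}\Big)\ \ (r\to\infty),$$ $$f(r)=1+O\Big(e^{-\sqrt{2}\min\{\sqrt{\gamma},\sqrt{\alpha\beta}\}(1-\varepsilon)r}\Big)\ \ (r\to\infty)\quad\text{if }\gamma>0,$$ $$f(r)=1+O\Big(\frac1r\Big)\ \ (r\to\infty)\quad\text{if }\gamma=0,$$ $$u(r)=1+O\big(r^{2(1-\varepsilon)}\big),\qquad f(r)=O\Big(r^{\left(\sqrt{\frac14+\beta}-\frac12\right)(1-\varepsilon)}\Big)\quad (r\to0).$$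
   Context: For real parameters $\alpha,\beta>0$, $\gamma\ge0$, $$I(u,f)=\int_{0}^{\infty} \Big\{2(u')^{2}+\frac{(1-u^{2})^{2}}{r^{2}}+\alpha\big[ r^{2}(f')^{2}+\beta f^{2}u^{2}\big]+\frac{\alpha\gamma}{2}r^{2}(f^{2}-1)^{2}\Big\}\,dr,$$ and $X$ is the set of pairs $(u,f)$ of real functions on $(0,\infty)$, absolutely continuous on every compact subinterval of $(0,\infty)$, with $I(u,f)<\infty$ and $\lim_{r\to0}f(r)=0$, $\lim_{r\to0}u(r)=1$, $\lim_{r\to\infty}f(r)=1$, $\lim_{r\to\infty}u(r)=0$. *)

theory Defs
  imports "HOL-Analysis.Analysis" "HOL-Library.Landau_Symbols"
begin

definition abs_cont_on :: "real \<Rightarrow> real \<Rightarrow> (real \<Rightarrow> real) \<Rightarrow> bool" where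
  "abs_cont_on a b g \<longleftrightarrow>
     (\<forall>\<epsilon>>0. \<exists>\<delta>>0. \<forall>(n::nat) (x::nat \<Rightarrow> real) (y::nat \<Rightarrow> real).
        (\<forall>i<n. a \<le> x i \<and> x i \<le> y i \<and> y i \<le> b) \<and>
        (\<forall>i<n. \<forall>j<n. i \<noteq> j \<longrightarrow> y i \<le> x j \<or> y j \<le> x i) \<and>
        (\<Sum>i<n. y i - x i) < \<delta>
        \<longrightarrow> (\<Sum>i<n. \<bar>g (y i) - g (x i)\<bar>) < \<epsilon>)"

definition loc_abs_cont :: "(real \<Rightarrow> real) \<Rightarrow> bool" where
  "loc_abs_cont g \<longleftrightarrow> (\<forall>a b. 0 < a \<and> a \<le> b \<longrightarrow> abs_cont_on a b g)"

text \<open>The derivatives are the (almost everywhere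
  existing) pointwise derivatives \<open>deriv\<close>; the integrand is nonnegative, so
  the integral is taken as a nonnegative (extended) Lebesgue integral.\<close>
definition energy :: "real \<Rightarrow> real \<Rightarrow> real \<Rightarrow> (real \<Rightarrow> real) \<Rightarrow> (real \<Rightarrow> real) \<Rightarrow> ennreal" where
  "energy \<alpha> \<beta> \<gamma> u f =
     (\<integral>\<^sup>+ r \<in> {0<..}.
        ennreal (2 * (deriv u r)\<^sup>2 + (1 - (u r)\<^sup>2)\<^sup>2 / r\<^sup>2
                 + \<alpha> * (r\<^sup>2 * (deriv f r)\<^sup>2 + \<beta> * (f r)\<^sup>2 * (u r)\<^sup>2)
                 + \<alpha> * \<gamma> / 2 * r\<^sup>2 * ((f r)\<^sup>2 - 1)\<^sup>2) \<partial>lebesgue)"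

definition admissible :: "real \<Rightarrow> real \<Rightarrow> real \<Rightarrow> (real \<Rightarrow> real) \<Rightarrow> (real \<Rightarrow> real) \<Rightarrow> bool" where
  "admissible \<alpha> \<beta> \<gamma> u f \<longleftrightarrow>
     loc_abs_cont u \<and> loc_abs_cont f \<and> energy \<alpha> \<beta> \<gamma> u f < \<infinity> \<and>
     (f \<longlongrightarrow> 0) (at_right 0) \<and> (u \<longlongrightarrow> 1) (at_right 0) \<and>
     (f \<longlongrightarrow> 1) at_top \<and> (u \<longlongrightarrow> 0) at_top"

end

theory Submission
  imports Defs "HOL-Real_Asymp.Real_Asymp"
begin

text \<open>Positivity comes from minimality. If \<open>u\<close> (or \<open>f\<close>) had a zero with nonzero derivative,
  replacing it by its negative beyond the zero, bridged by a chord across a short interval,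
  would keep the boundary values and strictly lower the energy; at a zero with vanishing
  derivative the linear second-order equation forces the function to vanish identically,
  contradicting the boundary values. The bounds \<open>u < 1\<close>, \<open>f < 1\<close> and all decay rates follow
  from the maximum principle: the difference between \<open>u\<close>, \<open>1 - f\<close>, \<open>1 - u\<close> or \<open>f\<close> and a
  barrier \<open>C exp (-k r)\<close> or \<open>C r\<^sup>p\<close> cannot have a nonnegative interior maximum, since the equations
  make it convex there. For \<open>\<gamma> = 0\<close> the flux \<open>r\<^sup>2 f'\<close> stays bounded, giving \<open>1 - f = O(1/r)\<close>.\<close>

section \<open>Maximum principle\<close>

lemma DERIV_local_max_second_deriv_nonpos:
  fixes d d' d'' :: "real \<Rightarrow> real"
  assumes e: "e > 0"
    and D1: "\<And>x. \<bar>c - x\<bar> < e \<Longrightarrow> (d has_real_derivative d' x) (at x)"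
    and D2: "(d' has_real_derivative d'' c) (at c)"
    and max: "\<And>y. \<bar>c - y\<bar> < e \<Longrightarrow> d y \<le> d c"
  shows "d' c = 0" and "d'' c \<le> 0"
proof -
  show d'c: "d' c = 0" using DERIV_local_max[OF D1[of c] e] max e by auto
  show "d'' c \<le> 0"
  proof (rule ccontr)
    assume "\<not> d'' c \<le> 0"
    from DERIV_pos_inc_right[OF D2] this obtain h0
      where h0: "h0 > 0" "\<And>h. h > 0 \<Longrightarrow> h < h0 \<Longrightarrow> d' c < d' (c + h)"
      by auto
    define h where "h = min h0 e / 2"
    have h: "h > 0" "h < h0" "h < e" using h0 e by (auto simp: h_def)
    obtain z where z: "c < z" "z < c + h" "d (c + h) - d c = h * d' z"
      using MVT2[of c "c + h" d d'] h D1 by auto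
    have "d' z > 0" using h0(2)[of "z - c"] z h d'c by auto
    with z h have "d (c + h) > d c" by (simp add: algebra_simps)
    with max[of "c + h"] h show False by auto
  qed
qed

lemma max_principle:
  fixes d d' d'' :: "real \<Rightarrow> real"
  assumes "open S"
    and D1: "\<And>x. x \<in> S \<Longrightarrow> (d has_real_derivative d' x) (at x)"
    and D2: "\<And>x. x \<in> S \<Longrightarrow> (d' has_real_derivative d'' x) (at x)"
    and convex: "\<And>x. x \<in> S \<Longrightarrow> d x \<ge> 0 \<Longrightarrow> d' x = 0 \<Longrightarrow> d'' x > 0"
    and confined: "\<And>y. y \<in> S \<Longrightarrow> d y > 0 \<Longrightarrow>
                     \<exists>K. compact K \<and> K \<subseteq> S \<and> (\<forall>z\<in>S - K. d z < d y)"
    and x: "x \<in> S"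
  shows "d x < 0"
proof (rule ccontr)
  assume "\<not> d x < 0"
  have "\<exists>c\<in>S. d c \<ge> 0 \<and> (\<forall>z\<in>S. d z \<le> d c)"
  proof (cases "\<exists>y\<in>S. d y > 0")
    case True
    then obtain y where y: "y \<in> S" "d y > 0" by blast
    obtain K where K: "compact K" "K \<subseteq> S" "\<And>z. z \<in> S - K \<Longrightarrow> d z < d y"
      using confined[OF y] by blast
    have "y \<in> K" using K(3)[of y] y by auto
    have "continuous_on K d"
      using K(2) D1 by (intro continuous_at_imp_continuous_on ballI DERIV_isCont) blast
    then obtain c where c: "c \<in> K" "\<And>z. z \<in> K \<Longrightarrow> d z \<le> d c"
      using continuous_attains_sup[OF K(1)] \<open>y \<in> K\<close> by blast
    have "d y \<le> d c" using c(2) \<open>y \<in> K\<close> .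
    then show ?thesis
      using c K y by (intro bexI[of _ c]) (force intro: less_imp_le order.strict_trans2)+
  next
    case False
    with x \<open>\<not> d x < 0\<close> show ?thesis by (intro bexI[of _ x]) (auto simp: not_less)
  qed
  then obtain c where c: "c \<in> S" "d c \<ge> 0" "\<And>z. z \<in> S \<Longrightarrow> d z \<le> d c" by blast
  obtain e where e: "e > 0" "ball c e \<subseteq> S" using \<open>open S\<close> c(1) open_contains_ball by blast
  have near: "\<bar>c - z\<bar> < e \<Longrightarrow> z \<in> S" for z using e(2) by (auto simp: dist_real_def)
  have "d' c = 0" "d'' c \<le> 0"
    using DERIV_local_max_second_deriv_nonpos[OF e(1), of c d d' d''] D1 D2 c near by blast+
  with convex[OF c(1,2)] show False by simp
qed

lemma superlevel_confined_Ioi: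
  fixes d :: "real \<Rightarrow> real"
  assumes "(d \<longlongrightarrow> La) (at_right a)" "La \<le> 0" "(d \<longlongrightarrow> Lb) at_top" "Lb \<le> 0"
    and "y > a" "d y > 0"
  shows "\<exists>K. compact K \<and> K \<subseteq> {a<..} \<and> (\<forall>z\<in>{a<..} - K. d z < d y)"
proof -
  have "eventually (\<lambda>r. d r < d y) (at_right a)" "eventually (\<lambda>r. d r < d y) at_top"
    using assms by (auto intro: order_tendstoD(2))
  then obtain b B where b: "b > a" "\<And>r. a < r \<Longrightarrow> r < b \<Longrightarrow> d r < d y"
    and B: "\<And>r. r \<ge> B \<Longrightarrow> d r < d y"
    by (auto simp: eventually_at_right_field eventually_at_top_linorder)
  show ?thesis
    using b B \<open>y > a\<close>
    by (intro exI[of _ "{(a + min b y) / 2 .. max B y}"]) (auto simp: not_le)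
qed

lemma superlevel_confined_Ioo:
  fixes d :: "real \<Rightarrow> real"
  assumes "(d \<longlongrightarrow> La) (at_right a)" "La \<le> 0" "(d \<longlongrightarrow> Lb) (at_left b)" "Lb \<le> 0"
    and "a < y" "y < b" "d y > 0"
  shows "\<exists>K. compact K \<and> K \<subseteq> {a<..<b} \<and> (\<forall>z\<in>{a<..<b} - K. d z < d y)"
proof -
  have "eventually (\<lambda>r. d r < d y) (at_right a)" "eventually (\<lambda>r. d r < d y) (at_left b)"
    using assms by (auto intro: order_tendstoD(2))
  then obtain a' b' where a': "a' > a" "\<And>r. a < r \<Longrightarrow> r < a' \<Longrightarrow> d r < d y"
    and b': "b' < b" "\<And>r. b' < r \<Longrightarrow> r < b \<Longrightarrow> d r < d y"
    by (auto simp: eventually_at_right_field eventually_at_left_field)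
  show ?thesis
    using a' b' \<open>a < y\<close> \<open>y < b\<close>
    by (intro exI[of _ "{(a + min a' y) / 2 .. (b + max b' y) / 2}"]) (auto simp: not_le)
qed

lemma max_principle_Ioi:
  fixes d d' d'' :: "real \<Rightarrow> real"
  assumes "\<And>x. x > a \<Longrightarrow> (d has_real_derivative d' x) (at x)"
    and "\<And>x. x > a \<Longrightarrow> (d' has_real_derivative d'' x) (at x)"
    and "(d \<longlongrightarrow> La) (at_right a)" "La \<le> 0" "(d \<longlongrightarrow> Lb) at_top" "Lb \<le> 0"
    and "\<And>x. x > a \<Longrightarrow> d x \<ge> 0 \<Longrightarrow> d' x = 0 \<Longrightarrow> d'' x > 0"
    and "x > a"
  shows "d x < 0"
  using assms superlevel_confined_Ioi[OF assms(3-6)]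
  by (intro max_principle[of "{a<..}" d d' d'']) auto

lemma max_principle_Ioo:
  fixes d d' d'' :: "real \<Rightarrow> real"
  assumes "\<And>x. a < x \<Longrightarrow> x < b \<Longrightarrow> (d has_real_derivative d' x) (at x)"
    and "\<And>x. a < x \<Longrightarrow> x < b \<Longrightarrow> (d' has_real_derivative d'' x) (at x)"
    and "(d \<longlongrightarrow> La) (at_right a)" "La \<le> 0" "(d \<longlongrightarrow> Lb) (at_left b)" "Lb \<le> 0"
    and "\<And>x. a < x \<Longrightarrow> x < b \<Longrightarrow> d x \<ge> 0 \<Longrightarrow> d' x = 0 \<Longrightarrow> d'' x > 0"
    and "a < x" "x < b"
  shows "d x < 0"
  using assms superlevel_confined_Ioo[OF assms(3-6)]
  by (intro max_principle[of "{a<..<b}" d d' d'']) auto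

section \<open>Uniqueness for linear second-order equations\<close>

lemma gronwall_vanishing:
  fixes E E' :: "real \<Rightarrow> real"
  assumes D: "\<And>x. x \<in> {a..b} \<Longrightarrow> (E has_real_derivative E' x) (at x)"
    and bound: "\<And>x. x \<in> {a..b} \<Longrightarrow> \<bar>E' x\<bar> \<le> K * E x"
    and nonneg: "\<And>x. x \<in> {a..b} \<Longrightarrow> E x \<ge> 0"
    and c: "c \<in> {a..b}" "E c = 0"
    and x: "x \<in> {a..b}"
  shows "E x = 0"
proof (cases "c \<le> x")
  case True
  have "E x * exp (- K * x) \<le> E c * exp (- K * c)"
  proof (rule DERIV_nonpos_imp_nonincreasing[OF True])
    fix t assume "c \<le> t" "t \<le> x"
    then have t: "t \<in> {a..b}" using c x by auto
    have "((\<lambda>t. E t * exp (- K * t)) has_real_derivative (E' t - K * E t) * exp (- K * t)) (at t)"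
      by (rule derivative_eq_intros D[OF t] refl | simp add: algebra_simps)+
    moreover have "(E' t - K * E t) * exp (- K * t) \<le> 0"
      using bound[OF t] by (simp add: abs_le_iff mult_le_0_iff)
    ultimately show "\<exists>y. ((\<lambda>t. E t * exp (- K * t)) has_real_derivative y) (at t) \<and> y \<le> 0"
      by blast
  qed
  with c nonneg[OF x] show ?thesis by (simp add: mult_le_0_iff)
next
  case False
  then have "x \<le> c" by simp
  have "E x * exp (K * x) \<le> E c * exp (K * c)"
  proof (rule DERIV_nonneg_imp_nondecreasing[OF \<open>x \<le> c\<close>])
    fix t assume "x \<le> t" "t \<le> c"
    then have t: "t \<in> {a..b}" using c x by auto
    have "((\<lambda>t. E t * exp (K * t)) has_real_derivative (E' t + K * E t) * exp (K * t)) (at t)"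
      by (rule derivative_eq_intros D[OF t] refl | simp add: algebra_simps)+
    moreover have "(E' t + K * E t) * exp (K * t) \<ge> 0"
      using bound[OF t] by (simp add: abs_le_iff)
    ultimately show "\<exists>y. ((\<lambda>t. E t * exp (K * t)) has_real_derivative y) (at t) \<and> y \<ge> 0"
      by blast
  qed
  with c nonneg[OF x] show ?thesis by (simp add: mult_le_0_iff)
qed

lemma linear_ode_vanishing:
  fixes w w' p q :: "real \<Rightarrow> real"
  assumes D1: "\<And>x. x \<in> {a..b} \<Longrightarrow> (w has_real_derivative w' x) (at x)"
    and D2: "\<And>x. x \<in> {a..b} \<Longrightarrow> (w' has_real_derivative p x * w' x + q x * w x) (at x)"
    and "continuous_on {a..b} p" "continuous_on {a..b} q"
    and c: "c \<in> {a..b}" "w c = 0" "w' c = 0"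
    and x: "x \<in> {a..b}"
  shows "w x = 0"
proof -
  obtain P Q where P: "\<And>x. x \<in> {a..b} \<Longrightarrow> \<bar>p x\<bar> \<le> P" and Q: "\<And>x. x \<in> {a..b} \<Longrightarrow> \<bar>q x\<bar> \<le> Q"
    using compact_continuous_image[OF _ compact_Icc, THEN compact_imp_bounded]
      \<open>continuous_on {a..b} p\<close> \<open>continuous_on {a..b} q\<close>
    by (force simp: bounded_real)
  define E where "E t = (w t)\<^sup>2 + (w' t)\<^sup>2" for t
  define E' where "E' t = 2 * w t * w' t + 2 * w' t * (p t * w' t + q t * w t)" for t
  have "E x = 0"
  proof (rule gronwall_vanishing[of a b E E' "1 + Q + 2 * P" c])
    fix t assume t: "t \<in> {a..b}"
    show "(E has_real_derivative E' t) (at t)"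
      unfolding E_def E'_def by (rule derivative_eq_intros D1[OF t] D2[OF t] | simp)+
    have "\<bar>2 * w t * w' t\<bar> \<le> E t"
      using sum_squares_bound[of "\<bar>w t\<bar>" "\<bar>w' t\<bar>"] by (simp add: E_def abs_mult)
    moreover have "(w' t)\<^sup>2 \<le> E t" by (simp add: E_def)
    moreover have "\<bar>1 + q t\<bar> \<le> 1 + Q" "\<bar>p t\<bar> \<le> P" using P[OF t] Q[OF t] by auto
    ultimately have "\<bar>2 * w t * w' t\<bar> * \<bar>1 + q t\<bar> + 2 * \<bar>p t\<bar> * (w' t)\<^sup>2 \<le> E t * (1 + Q) + 2 * P * E t"
      by (intro add_mono mult_mono) auto
    moreover have "\<bar>E' t\<bar> \<le> \<bar>2 * w t * w' t\<bar> * \<bar>1 + q t\<bar> + 2 * \<bar>p t\<bar> * (w' t)\<^sup>2"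
    proof -
      have "E' t = 2 * w t * w' t * (1 + q t) + 2 * p t * (w' t)\<^sup>2"
        by (simp add: E'_def algebra_simps power2_eq_square)
      then show ?thesis by (simp add: abs_mult abs_triangle_ineq[THEN order_trans])
    qed
    ultimately show "\<bar>E' t\<bar> \<le> (1 + Q + 2 * P) * E t" by (simp add: algebra_simps)
  qed (use c x in \<open>auto simp: E_def\<close>)
  then show ?thesis by (simp add: E_def)
qed

section \<open>The sign-switching competitor\<close>

lemma abs_cont_on_lipschitz:
  assumes "L-lipschitz_on {a..b} g"
  shows "abs_cont_on a b g"
  unfolding abs_cont_on_def
proof (intro allI impI)
  fix \<epsilon> :: real assume "\<epsilon> > 0"
  have L: "0 \<le> L" using lipschitz_on_nonneg[OF assms] .
  show "\<exists>\<delta>>0. \<forall>(n::nat) (x::nat \<Rightarrow> real) (y::nat \<Rightarrow> real).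
        (\<forall>i<n. a \<le> x i \<and> x i \<le> y i \<and> y i \<le> b) \<and>
        (\<forall>i<n. \<forall>j<n. i \<noteq> j \<longrightarrow> y i \<le> x j \<or> y j \<le> x i) \<and>
        (\<Sum>i<n. y i - x i) < \<delta>
        \<longrightarrow> (\<Sum>i<n. \<bar>g (y i) - g (x i)\<bar>) < \<epsilon>"
  proof (intro exI[of _ "\<epsilon> / (L + 1)"] conjI allI impI)
    show "\<epsilon> / (L + 1) > 0" using \<open>\<epsilon> > 0\<close> L by simp
    fix n :: nat and x y :: "nat \<Rightarrow> real"
    assume H: "(\<forall>i<n. a \<le> x i \<and> x i \<le> y i \<and> y i \<le> b) \<and>
        (\<forall>i<n. \<forall>j<n. i \<noteq> j \<longrightarrow> y i \<le> x j \<or> y j \<le> x i) \<and>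
        (\<Sum>i<n. y i - x i) < \<epsilon> / (L + 1)"
    have "(\<Sum>i<n. \<bar>g (y i) - g (x i)\<bar>) \<le> (\<Sum>i<n. (L + 1) * (y i - x i))"
    proof (rule sum_mono)
      fix i assume "i \<in> {..<n}"
      then have i: "a \<le> x i" "x i \<le> y i" "y i \<le> b" using H by auto
      then have "\<bar>g (y i) - g (x i)\<bar> \<le> L * (y i - x i)"
        using lipschitz_onD[OF assms, of "y i" "x i"] by (simp add: dist_real_def)
      also have "\<dots> \<le> (L + 1) * (y i - x i)" using i by (simp add: algebra_simps)
      finally show "\<bar>g (y i) - g (x i)\<bar> \<le> (L + 1) * (y i - x i)" .
    qed
    also have "\<dots> = (L + 1) * (\<Sum>i<n. y i - x i)" by (simp add: sum_distrib_left)
    also have "\<dots> < \<epsilon>" using H L by (simp add: field_simps)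
    finally show "(\<Sum>i<n. \<bar>g (y i) - g (x i)\<bar>) < \<epsilon>" .
  qed
qed

lemma lipschitz_on_continuous_deriv:
  fixes w w' :: "real \<Rightarrow> real"
  assumes "\<And>x. x \<in> {a..b} \<Longrightarrow> (w has_real_derivative w' x) (at x)" "continuous_on {a..b} w'"
  obtains L where "L-lipschitz_on {a..b} w"
proof -
  obtain B where B: "\<And>x. x \<in> {a..b} \<Longrightarrow> \<bar>w' x\<bar> \<le> B"
    using compact_continuous_image[OF assms(2) compact_Icc, THEN compact_imp_bounded]
    by (force simp: bounded_real)
  have "(max B 0)-lipschitz_on {a..b} w"
  proof (rule lipschitz_onI)
    fix x y assume "x \<in> {a..b}" "y \<in> {a..b}"
    then have "norm (w x - w y) \<le> max B 0 * norm (x - y)"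
      using B assms(1) by (intro field_differentiable_bound[of "{a..b}" w w'])
        (auto intro: has_field_derivative_at_within order_trans[OF _ max.cobounded1])
    then show "dist (w x) (w y) \<le> max B 0 * dist x y" by (simp add: dist_norm)
  qed simp
  then show thesis by (rule that)
qed

definition sign_switch :: "(real \<Rightarrow> real) \<Rightarrow> real \<Rightarrow> real \<Rightarrow> real \<Rightarrow> real" where
  "sign_switch w a b r =
     (if r \<le> a then w r else if r \<le> b then w a - (w a + w b) / (b - a) * (r - a) else - w r)"

lemma sign_switch_loc_abs_cont:
  fixes w w' :: "real \<Rightarrow> real"
  assumes ab: "0 < a" "a < b"
    and D: "\<And>x. x > 0 \<Longrightarrow> (w has_real_derivative w' x) (at x)"
    and C: "\<And>x. x > 0 \<Longrightarrow> isCont w' x"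
  shows "loc_abs_cont (sign_switch w a b)"
  unfolding loc_abs_cont_def
proof (intro allI impI)
  fix a0 b0 :: real assume ab0: "0 < a0 \<and> a0 \<le> b0"
  define P Q where "P = min a0 a" and "Q = max b0 b"
  have PQ: "0 < P" "P \<le> a" "b \<le> Q" "P \<le> a0" "b0 \<le> Q" using ab ab0 by (auto simp: P_def Q_def)
  have "continuous_on {P..Q} w'"
    using C PQ by (intro continuous_at_imp_continuous_on) auto
  then obtain L where Lw: "L-lipschitz_on {P..Q} w"
    using lipschitz_on_continuous_deriv[of P Q w w'] D PQ by auto
  define s where "s = (w a + w b) / (b - a)"
  define chord where "chord r = w a - s * (r - a)" for r
  have "chord x - chord y = - s * (x - y)" for x y
    by (simp add: chord_def algebra_simps)
  then have "\<bar>s\<bar>-lipschitz_on {a..b} chord"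
    by (intro lipschitz_onI) (simp_all add: dist_real_def abs_mult)
  moreover have "L-lipschitz_on {b..Q} (\<lambda>r. - w r)"
    using lipschitz_on_subset[OF Lw, of "{b..Q}"] PQ ab by simp
  moreover have "chord b = - w b" using ab by (simp add: chord_def s_def)
  ultimately have right: "(max \<bar>s\<bar> L)-lipschitz_on {a..Q}
      (\<lambda>r. if r \<le> b then chord r else - w r)"
    by (rule lipschitz_on_concat_max)
  have left: "L-lipschitz_on {P..a} w"
    using lipschitz_on_subset[OF Lw, of "{P..a}"] PQ ab by simp
  have "w a = (if a \<le> b then chord a else - w a)" using ab by (simp add: chord_def)
  from lipschitz_on_concat_max[OF left right this]
  have "(max L (max \<bar>s\<bar> L))-lipschitz_on {P..Q}
      (\<lambda>r. if r \<le> a then w r else if r \<le> b then chord r else - w r)" by simp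
  also have "(\<lambda>r. if r \<le> a then w r else if r \<le> b then chord r else - w r) = sign_switch w a b"
    by (simp add: fun_eq_iff sign_switch_def chord_def s_def)
  finally have "(max L (max \<bar>s\<bar> L))-lipschitz_on {a0..b0} (sign_switch w a b)"
    by (rule lipschitz_on_subset) (use PQ in auto)
  then show "abs_cont_on a0 b0 (sign_switch w a b)" by (rule abs_cont_on_lipschitz)
qed

lemma sign_switch_tendsto_at_right_0:
  assumes "(w \<longlongrightarrow> l) (at_right 0)" "0 < a"
  shows "(sign_switch w a b \<longlongrightarrow> l) (at_right 0)"
proof -
  have "eventually (\<lambda>r. w r = sign_switch w a b r) (at_right 0)"
    using \<open>0 < a\<close> by (auto simp: eventually_at_right_field sign_switch_def intro!: exI[of _ a])
  then show ?thesis using assms(1) by (rule Lim_transform_eventually[rotated])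
qed

lemma sign_switch_tendsto_at_top:
  assumes "((\<lambda>r. - w r) \<longlongrightarrow> l) at_top"
  shows "(sign_switch w a b \<longlongrightarrow> l) at_top"
proof -
  have "eventually (\<lambda>r. - w r = sign_switch w a b r) at_top"
    by (auto simp: eventually_at_top_linorder sign_switch_def intro!: exI[of _ "max a b + 1"])
  then show ?thesis using assms by (rule Lim_transform_eventually[rotated])
qed

lemma sign_switch_squares_outside:
  assumes D: "(w has_real_derivative w' r) (at r)" and "r < a \<or> b < r" "a < b"
  shows "(sign_switch w a b r)\<^sup>2 = (w r)\<^sup>2" and "(deriv (sign_switch w a b) r)\<^sup>2 = (w' r)\<^sup>2"
proof -
  have "sign_switch w a b r = (if r < a then w r else - w r) \<and>
        (sign_switch w a b has_real_derivative (if r < a then w' r else - w' r)) (at r)"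
  proof (cases "r < a")
    case True
    have "(sign_switch w a b has_real_derivative w' r) (at r)"
      by (rule has_field_derivative_transform_within_open[OF D, of "{..<a}"])
         (use True in \<open>auto simp: sign_switch_def\<close>)
    with True show ?thesis by (simp add: sign_switch_def)
  next
    case False
    with assms(2) have "b < r" by simp
    have "(sign_switch w a b has_real_derivative - w' r) (at r)"
      by (rule has_field_derivative_transform_within_open[OF DERIV_minus[OF D], of "{b<..}"])
         (use \<open>b < r\<close> \<open>a < b\<close> in \<open>auto simp: sign_switch_def\<close>)
    with False \<open>b < r\<close> \<open>a < b\<close> show ?thesis by (simp add: sign_switch_def)
  qed
  then show "(sign_switch w a b r)\<^sup>2 = (w r)\<^sup>2" "(deriv (sign_switch w a b) r)\<^sup>2 = (w' r)\<^sup>2"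
    by (auto simp: DERIV_imp_deriv)
qed

lemma deriv_sign_switch_chord:
  assumes "a < r" "r < b"
  shows "deriv (sign_switch w a b) r = - ((w a + w b) / (b - a))"
proof -
  have "((\<lambda>r. w a - (w a + w b) / (b - a) * (r - a)) has_real_derivative - ((w a + w b) / (b - a))) (at r)"
    using assms by (auto intro!: derivative_eq_intros)
  then have "(sign_switch w a b has_real_derivative - ((w a + w b) / (b - a))) (at r)"
    by (rule has_field_derivative_transform_within_open[of _ _ _ "{a<..<b}"])
       (use assms in \<open>auto simp: sign_switch_def dest: order.strict_trans\<close>)
  then show ?thesis by (rule DERIV_imp_deriv)
qed

lemma sign_switch_chord_bound:
  assumes "a < b" "a \<le> r" "r \<le> b"
  shows "\<bar>sign_switch w a b r\<bar> \<le> max (\<bar>w a\<bar>) (\<bar>w b\<bar>)"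
proof -
  define t where "t = (r - a) / (b - a)"
  have t: "0 \<le> t" "t \<le> 1" using assms by (auto simp: t_def divide_simps)
  have "sign_switch w a b r = w a - (w a + w b) * t"
    using assms by (cases "r = a") (auto simp: sign_switch_def t_def not_le)
  also have "\<dots> = (1 - t) * w a + t * (- w b)" by (simp add: algebra_simps)
  also have "\<bar>\<dots>\<bar> \<le> (1 - t) * \<bar>w a\<bar> + t * \<bar>w b\<bar>"
    using t abs_triangle_ineq[of "(1 - t) * w a" "t * (- w b)"] by (simp add: abs_mult)
  also have "\<dots> \<le> (1 - t) * max (\<bar>w a\<bar>) (\<bar>w b\<bar>) + t * max (\<bar>w a\<bar>) (\<bar>w b\<bar>)"
    using t by (intro add_mono mult_left_mono) auto
  also have "\<dots> = max (\<bar>w a\<bar>) (\<bar>w b\<bar>)" by (simp add: algebra_simps)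
  finally show ?thesis .
qed

lemma symmetric_chord_slope_small:
  fixes w :: "real \<Rightarrow> real"
  assumes "(w has_real_derivative c) (at r0)" "w r0 = 0" "e > 0"
  obtains d where "d > 0" "\<And>\<delta>. 0 < \<delta> \<Longrightarrow> \<delta> < d \<Longrightarrow> \<bar>(w (r0 - \<delta>) + w (r0 + \<delta>)) / (2 * \<delta>)\<bar> \<le> e"
proof -
  obtain d where "d > 0"
    and d: "\<And>h. h \<noteq> 0 \<Longrightarrow> \<bar>h\<bar> < d \<Longrightarrow> \<bar>(w (r0 + h) - w r0) / h - c\<bar> < e"
    using LIM_D[OF assms(1)[unfolded DERIV_def] \<open>e > 0\<close>] by auto
  have "\<bar>(w (r0 - \<delta>) + w (r0 + \<delta>)) / (2 * \<delta>)\<bar> \<le> e" if "0 < \<delta>" "\<delta> < d" for \<delta>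
  proof -
    define X Y where "X = w (r0 - \<delta>) / (- \<delta>) - c" and "Y = w (r0 + \<delta>) / \<delta> - c"
    have "\<bar>X\<bar> < e" "\<bar>Y\<bar> < e" using d[of "- \<delta>"] d[of \<delta>] that \<open>w r0 = 0\<close> by (auto simp: X_def Y_def)
    then have "\<bar>(Y - X) / 2\<bar> \<le> e" using abs_triangle_ineq4[of Y X] by simp
    moreover have "(w (r0 - \<delta>) + w (r0 + \<delta>)) / (2 * \<delta>) = (Y - X) / 2"
      using that by (simp add: X_def Y_def field_simps)
    ultimately show ?thesis by (simp only:)
  qed
  with \<open>d > 0\<close> show thesis by (rule that)
qed

lemma sign_switch_near_transversal_zero:
  fixes w w' :: "real \<Rightarrow> real"
  assumes D: "\<And>r. r > 0 \<Longrightarrow> (w has_real_derivative w' r) (at r)"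
    and "isCont w' r0" "r0 > 0" "w r0 = 0" "w' r0 \<noteq> 0" "\<rho> > 0"
  obtains a b where "r0 / 2 \<le> a" "a < b" "b \<le> 3 * r0 / 2"
    and "\<And>r. a \<le> r \<Longrightarrow> r \<le> b \<Longrightarrow>
           \<bar>w r\<bar> \<le> \<rho> \<and> \<bar>sign_switch w a b r\<bar> \<le> \<rho> \<and> (w' r0)\<^sup>2 / 4 \<le> (w' r)\<^sup>2"
    and "\<And>r. a < r \<Longrightarrow> r < b \<Longrightarrow> (deriv (sign_switch w a b) r)\<^sup>2 \<le> (w' r0)\<^sup>2 / 16"
proof -
  define c where "c = w' r0"
  have "c \<noteq> 0" using assms by (simp add: c_def)
  have Dc: "(w has_real_derivative c) (at r0)" using D \<open>r0 > 0\<close> by (simp add: c_def)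
  obtain d1 where d1: "d1 > 0" "\<And>x. x \<noteq> r0 \<Longrightarrow> \<bar>x - r0\<bar> < d1 \<Longrightarrow> \<bar>w x - w r0\<bar> < \<rho>"
    using LIM_D[OF DERIV_isCont[OF Dc, unfolded isCont_def] \<open>\<rho> > 0\<close>] by auto
  obtain d2 where d2: "d2 > 0" "\<And>x. x \<noteq> r0 \<Longrightarrow> \<bar>x - r0\<bar> < d2 \<Longrightarrow> \<bar>w' x - c\<bar> < \<bar>c\<bar> / 2"
    using LIM_D[OF \<open>isCont w' r0\<close>[unfolded isCont_def], of "\<bar>c\<bar> / 2"] \<open>c \<noteq> 0\<close>
    by (auto simp: c_def)
  obtain d3 where "d3 > 0" and d3: "\<And>\<delta>. 0 < \<delta> \<Longrightarrow> \<delta> < d3 \<Longrightarrow>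
      \<bar>(w (r0 - \<delta>) + w (r0 + \<delta>)) / (2 * \<delta>)\<bar> \<le> \<bar>c\<bar> / 4"
    using symmetric_chord_slope_small[OF Dc \<open>w r0 = 0\<close>, of "\<bar>c\<bar> / 4"] \<open>c \<noteq> 0\<close> by auto
  define \<delta> where "\<delta> = min (min d1 d2) (min d3 r0) / 2"
  have \<delta>: "\<delta> > 0" "\<delta> < d1" "\<delta> < d2" "\<delta> < d3" "\<delta> \<le> r0 / 2"
    using d1 d2 \<open>d3 > 0\<close> \<open>r0 > 0\<close> by (auto simp: \<delta>_def)
  define a b where "a = r0 - \<delta>" and "b = r0 + \<delta>"
  have ab: "r0 / 2 \<le> a" "a < b" "b \<le> 3 * r0 / 2" using \<delta> by (auto simp: a_def b_def)
  have w_small: "\<bar>w r\<bar> \<le> \<rho>" and w'_large: "c\<^sup>2 / 4 \<le> (w' r)\<^sup>2" if "a \<le> r" "r \<le> b" for r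
  proof -
    have "\<bar>r - r0\<bar> < d1" "\<bar>r - r0\<bar> < d2" using that \<delta> by (auto simp: a_def b_def)
    then have "\<bar>w r\<bar> \<le> \<rho> \<and> \<bar>w' r - c\<bar> \<le> \<bar>c\<bar> / 2"
      using d1(2)[of r] d2(2)[of r] \<open>w r0 = 0\<close> \<open>\<rho> > 0\<close> by (cases "r = r0") (auto simp: c_def)
    moreover have "\<bar>w' r - c\<bar> \<le> \<bar>c\<bar> / 2 \<Longrightarrow> \<bar>c\<bar> / 2 \<le> \<bar>w' r\<bar>" by linarith
    moreover have "\<bar>c\<bar> / 2 \<le> \<bar>w' r\<bar> \<Longrightarrow> c\<^sup>2 / 4 \<le> (w' r)\<^sup>2"
      using power_mono[of "\<bar>c\<bar> / 2" "\<bar>w' r\<bar>" 2] by (simp add: power_divide)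
    ultimately show "\<bar>w r\<bar> \<le> \<rho>" "c\<^sup>2 / 4 \<le> (w' r)\<^sup>2" by auto
  qed
  show thesis
  proof (rule that[OF ab, unfolded c_def[symmetric]])
    fix r assume r: "a \<le> r" "r \<le> b"
    have "\<bar>sign_switch w a b r\<bar> \<le> \<rho>"
      using sign_switch_chord_bound[OF ab(2) r, of w] w_small[of a] w_small[of b] ab by auto
    with w_small[OF r] w'_large[OF r]
    show "\<bar>w r\<bar> \<le> \<rho> \<and> \<bar>sign_switch w a b r\<bar> \<le> \<rho> \<and> c\<^sup>2 / 4 \<le> (w' r)\<^sup>2" by blast
  next
    fix r assume "a < r" "r < b"
    have "\<bar>deriv (sign_switch w a b) r\<bar> \<le> \<bar>c\<bar> / 4"
      using deriv_sign_switch_chord[OF \<open>a < r\<close> \<open>r < b\<close>, of w] d3 \<delta>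
      by (simp add: a_def b_def add.commute)
    from power_mono[OF this abs_ge_zero, of 2]
    show "(deriv (sign_switch w a b) r)\<^sup>2 \<le> c\<^sup>2 / 16" by (simp add: power_divide)
  qed
qed

section \<open>Energy comparison\<close>

definition energy_density :: "real \<Rightarrow> real \<Rightarrow> real \<Rightarrow> real \<Rightarrow> real \<Rightarrow> real \<Rightarrow> real \<Rightarrow> real \<Rightarrow> real" where
  "energy_density \<alpha> \<beta> \<gamma> du u df f r = 2 * du\<^sup>2 + (1 - u\<^sup>2)\<^sup>2 / r\<^sup>2
     + \<alpha> * (r\<^sup>2 * df\<^sup>2 + \<beta> * f\<^sup>2 * u\<^sup>2) + \<alpha> * \<gamma> / 2 * r\<^sup>2 * (f\<^sup>2 - 1)\<^sup>2"

lemma energy_eq_density: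
  "energy \<alpha> \<beta> \<gamma> u f = (\<integral>\<^sup>+ r. ennreal (energy_density \<alpha> \<beta> \<gamma> (deriv u r) (u r) (deriv f r) (f r) r)
     * indicator {0<..} r \<partial>lebesgue)"
  by (simp add: energy_def energy_density_def)

lemma energy_density_nonneg:
  "\<alpha> \<ge> 0 \<Longrightarrow> \<beta> \<ge> 0 \<Longrightarrow> \<gamma> \<ge> 0 \<Longrightarrow> energy_density \<alpha> \<beta> \<gamma> du u df f r \<ge> 0"
  unfolding energy_density_def by (intro add_nonneg_nonneg mult_nonneg_nonneg) auto

text \<open>No measurability of \<open>f\<close> is needed, which matters here: the energy density involves
  \<open>deriv\<close> of an arbitrary function.\<close>
lemma nn_integral_add_simple_le:
  assumes h: "simple_function M h"
  shows "integral\<^sup>N M f + integral\<^sup>S M h \<le> integral\<^sup>N M (\<lambda>x. f x + h x)"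
proof -
  have ne: "{g. simple_function M g \<and> g \<le> f} \<noteq> {}"
    by (auto intro!: exI[of _ "\<lambda>_. 0"] simp: le_fun_def)
  have "integral\<^sup>N M f + integral\<^sup>S M h =
      (SUP g\<in>{g. simple_function M g \<and> g \<le> f}. integral\<^sup>S M g + integral\<^sup>S M h)"
    unfolding nn_integral_def by (rule ennreal_SUP_add_left[OF ne, symmetric])
  also have "\<dots> \<le> integral\<^sup>N M (\<lambda>x. f x + h x)"
  proof (rule SUP_least)
    fix g assume g: "g \<in> {g. simple_function M g \<and> g \<le> f}"
    then have "integral\<^sup>S M g + integral\<^sup>S M h = integral\<^sup>S M (\<lambda>x. g x + h x)"
      using h by (subst simple_integral_add) auto
    also have "\<dots> \<le> integral\<^sup>N M (\<lambda>x. f x + h x)"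
      unfolding nn_integral_def
      by (rule SUP_upper) (use g h in \<open>auto simp: le_fun_def intro: add_right_mono\<close>)
    finally show "integral\<^sup>S M g + integral\<^sup>S M h \<le> integral\<^sup>N M (\<lambda>x. f x + h x)" .
  qed
  finally show ?thesis .
qed

lemma nn_integral_interval_gap:
  fixes G H :: "real \<Rightarrow> ennreal"
  assumes "AE r in lebesgue. G r + ennreal \<eta> * indicator {a<..<b} r \<le> H r" "a \<le> b" "\<eta> \<ge> 0"
  shows "integral\<^sup>N lebesgue G + ennreal (\<eta> * (b - a)) \<le> integral\<^sup>N lebesgue H"
proof -
  define S where "S r = ennreal \<eta> * indicator {a<..<b} r" for r
  have S: "simple_function lebesgue S"
    unfolding S_def by (intro simple_function_mult simple_function_indicator) auto
  have "integral\<^sup>S lebesgue S = integral\<^sup>N lebesgue S"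
    by (rule nn_integral_eq_simple_integral[OF S, symmetric])
  also have "\<dots> = ennreal (\<eta> * (b - a))"
    unfolding S_def using assms(2,3) by (subst nn_integral_cmult_indicator) (auto simp: ennreal_mult)
  finally have "integral\<^sup>S lebesgue S = ennreal (\<eta> * (b - a))" .
  with nn_integral_add_simple_le[OF S, of G] nn_integral_mono_AE[OF assms(1)]
  show ?thesis by (simp add: S_def)
qed

lemma energy_less_by_density_gap:
  fixes u f v g :: "real \<Rightarrow> real"
  assumes "\<alpha> \<ge> 0" "\<beta> \<ge> 0" "\<gamma> \<ge> 0"
    and finite: "energy \<alpha> \<beta> \<gamma> u f < \<infinity>"
    and "0 \<le> a" "a < b" "\<eta> > 0"
    and outside: "\<And>r. r > 0 \<Longrightarrow> r < a \<or> b < r \<Longrightarrow>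
        energy_density \<alpha> \<beta> \<gamma> (deriv v r) (v r) (deriv g r) (g r) r =
        energy_density \<alpha> \<beta> \<gamma> (deriv u r) (u r) (deriv f r) (f r) r"
    and inside: "\<And>r. a < r \<Longrightarrow> r < b \<Longrightarrow>
        energy_density \<alpha> \<beta> \<gamma> (deriv v r) (v r) (deriv g r) (g r) r + \<eta> \<le>
        energy_density \<alpha> \<beta> \<gamma> (deriv u r) (u r) (deriv f r) (f r) r"
  shows "energy \<alpha> \<beta> \<gamma> v g < energy \<alpha> \<beta> \<gamma> u f"
proof -
  define Gu where "Gu r = energy_density \<alpha> \<beta> \<gamma> (deriv u r) (u r) (deriv f r) (f r) r" for r
  define Gv where "Gv r = energy_density \<alpha> \<beta> \<gamma> (deriv v r) (v r) (deriv g r) (g r) r" for r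
  have "AE r in lebesgue. r \<noteq> a \<and> r \<noteq> b"
    by (intro AE_completion AE_conjI AE_lborel_singleton)
  then have "AE r in lebesgue. ennreal (Gv r) * indicator {0<..} r + ennreal \<eta> * indicator {a<..<b} r
      \<le> ennreal (Gu r) * indicator {0<..} r"
  proof (rule AE_mp, intro AE_I2 impI)
    fix r :: real assume "r \<noteq> a \<and> r \<noteq> b"
    then consider "a < r" "r < b" | "r > 0" "r < a \<or> b < r" | "r \<le> 0" by fastforce
    then show "ennreal (Gv r) * indicator {0<..} r + ennreal \<eta> * indicator {a<..<b} r
        \<le> ennreal (Gu r) * indicator {0<..} r"
    proof cases
      case 1
      have "ennreal (Gv r) + ennreal \<eta> = ennreal (Gv r + \<eta>)"
        using assms(1-3,7) energy_density_nonneg by (simp add: Gv_def ennreal_plus)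
      also have "\<dots> \<le> ennreal (Gu r)" using inside 1 by (auto simp: Gu_def Gv_def intro: ennreal_leI)
      finally show ?thesis using 1 \<open>0 \<le> a\<close> by simp
    qed (use outside \<open>0 \<le> a\<close> in \<open>auto simp: Gu_def Gv_def split: split_indicator\<close>)
  qed
  from nn_integral_interval_gap[OF this] \<open>a < b\<close> \<open>\<eta> > 0\<close>
  have "energy \<alpha> \<beta> \<gamma> v g + ennreal (\<eta> * (b - a)) \<le> energy \<alpha> \<beta> \<gamma> u f"
    unfolding energy_eq_density Gu_def Gv_def by simp
  moreover have "ennreal (\<eta> * (b - a)) > 0" using \<open>a < b\<close> \<open>\<eta> > 0\<close> by simp
  ultimately show ?thesis using finite
    by (metis add.right_neutral ennreal_add_left_cancel_less le_less_trans
        not_less_iff_gr_or_eq top.not_eq_extremum order.strict_trans2)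
qed

lemma abs_sq_diff_le:
  fixes s t \<rho> :: real
  assumes "\<bar>s\<bar> \<le> \<rho>" "\<bar>t\<bar> \<le> \<rho>" "\<rho> \<le> 1"
  shows "\<bar>s\<^sup>2 - t\<^sup>2\<bar> \<le> \<rho>\<^sup>2" and "\<bar>(1 - s\<^sup>2)\<^sup>2 - (1 - t\<^sup>2)\<^sup>2\<bar> \<le> 2 * \<rho>\<^sup>2"
proof -
  have s: "0 \<le> s\<^sup>2" "s\<^sup>2 \<le> \<rho>\<^sup>2" and t: "0 \<le> t\<^sup>2" "t\<^sup>2 \<le> \<rho>\<^sup>2"
    using assms power_mono[of "\<bar>s\<bar>" \<rho> 2] power_mono[of "\<bar>t\<bar>" \<rho> 2] by auto
  then show st: "\<bar>s\<^sup>2 - t\<^sup>2\<bar> \<le> \<rho>\<^sup>2" unfolding abs_le_iff by linarith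
  have "\<rho>\<^sup>2 \<le> 1" using assms by (simp add: power_le_one)
  have "(1 - s\<^sup>2)\<^sup>2 - (1 - t\<^sup>2)\<^sup>2 = (t\<^sup>2 - s\<^sup>2) * (2 - s\<^sup>2 - t\<^sup>2)"
    by (simp add: power2_eq_square algebra_simps)
  also have "\<bar>\<dots>\<bar> \<le> \<rho>\<^sup>2 * 2"
    unfolding abs_mult using s t st \<open>\<rho>\<^sup>2 \<le> 1\<close> by (intro mult_mono) (auto simp: abs_minus_commute)
  finally show "\<bar>(1 - s\<^sup>2)\<^sup>2 - (1 - t\<^sup>2)\<^sup>2\<bar> \<le> 2 * \<rho>\<^sup>2" by simp
qed

lemma energy_density_change_u:
  assumes "\<alpha> \<ge> 0" "\<beta> \<ge> 0" "\<bar>u1\<bar> \<le> \<rho>" "\<bar>u2\<bar> \<le> \<rho>" "\<rho> \<le> 1" "f\<^sup>2 \<le> F"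
  shows "energy_density \<alpha> \<beta> \<gamma> du2 u2 df f r + 2 * (du1\<^sup>2 - du2\<^sup>2) - \<rho>\<^sup>2 * (2 / r\<^sup>2 + \<alpha> * \<beta> * F)
    \<le> energy_density \<alpha> \<beta> \<gamma> du1 u1 df f r"
proof -
  have "0 \<le> F" using assms(6) zero_le_power2[of f] by linarith
  have "energy_density \<alpha> \<beta> \<gamma> du1 u1 df f r - energy_density \<alpha> \<beta> \<gamma> du2 u2 df f r =
      2 * (du1\<^sup>2 - du2\<^sup>2) + ((1 - u1\<^sup>2)\<^sup>2 - (1 - u2\<^sup>2)\<^sup>2) / r\<^sup>2 + \<alpha> * \<beta> * f\<^sup>2 * (u1\<^sup>2 - u2\<^sup>2)"
    unfolding energy_density_def by (simp add: diff_divide_distrib algebra_simps)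
  moreover have "- (2 * \<rho>\<^sup>2) / r\<^sup>2 \<le> ((1 - u1\<^sup>2)\<^sup>2 - (1 - u2\<^sup>2)\<^sup>2) / r\<^sup>2"
    using abs_sq_diff_le(2)[OF assms(3-5)] by (intro divide_right_mono) auto
  moreover have "\<bar>\<alpha> * \<beta> * f\<^sup>2 * (u1\<^sup>2 - u2\<^sup>2)\<bar> \<le> \<alpha> * \<beta> * F * \<rho>\<^sup>2"
    unfolding abs_mult using assms abs_sq_diff_le(1)[OF assms(3-5)] \<open>0 \<le> F\<close>
    by (intro mult_mono) auto
  ultimately show ?thesis
    unfolding abs_le_iff by (simp add: algebra_simps diff_divide_distrib)
qed

lemma energy_density_change_f:
  assumes "\<alpha> \<ge> 0" "\<beta> \<ge> 0" "\<gamma> \<ge> 0" "\<bar>f1\<bar> \<le> \<rho>" "\<bar>f2\<bar> \<le> \<rho>" "\<rho> \<le> 1" "u\<^sup>2 \<le> U"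
  shows "energy_density \<alpha> \<beta> \<gamma> du u df2 f2 r + \<alpha> * r\<^sup>2 * (df1\<^sup>2 - df2\<^sup>2)
      - \<rho>\<^sup>2 * (\<alpha> * \<beta> * U + \<alpha> * \<gamma> * r\<^sup>2)
    \<le> energy_density \<alpha> \<beta> \<gamma> du u df1 f1 r"
proof -
  have "0 \<le> U" using assms(7) zero_le_power2[of u] by linarith
  have "energy_density \<alpha> \<beta> \<gamma> du u df1 f1 r - energy_density \<alpha> \<beta> \<gamma> du u df2 f2 r =
      \<alpha> * r\<^sup>2 * (df1\<^sup>2 - df2\<^sup>2) + \<alpha> * \<beta> * u\<^sup>2 * (f1\<^sup>2 - f2\<^sup>2)
      + \<alpha> * \<gamma> / 2 * r\<^sup>2 * ((1 - f1\<^sup>2)\<^sup>2 - (1 - f2\<^sup>2)\<^sup>2)"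
    unfolding energy_density_def by (simp add: algebra_simps power2_commute[of _ 1])
  moreover have "\<bar>\<alpha> * \<beta> * u\<^sup>2 * (f1\<^sup>2 - f2\<^sup>2)\<bar> \<le> \<alpha> * \<beta> * U * \<rho>\<^sup>2"
    unfolding abs_mult using assms abs_sq_diff_le(1)[OF assms(4-6)] \<open>0 \<le> U\<close>
    by (intro mult_mono) auto
  moreover have "- (2 * \<rho>\<^sup>2) * (\<alpha> * \<gamma> / 2 * r\<^sup>2) \<le> ((1 - f1\<^sup>2)\<^sup>2 - (1 - f2\<^sup>2)\<^sup>2) * (\<alpha> * \<gamma> / 2 * r\<^sup>2)"
    using assms abs_sq_diff_le(2)[OF assms(4-6)] by (intro mult_right_mono) auto
  moreover have "\<rho>\<^sup>2 * (\<alpha> * \<beta> * U + \<alpha> * \<gamma> * r\<^sup>2) = \<alpha> * \<beta> * U * \<rho>\<^sup>2 + 2 * \<rho>\<^sup>2 * (\<alpha> * \<gamma> / 2 * r\<^sup>2)"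
    "\<alpha> * \<gamma> / 2 * r\<^sup>2 * ((1 - f1\<^sup>2)\<^sup>2 - (1 - f2\<^sup>2)\<^sup>2) = ((1 - f1\<^sup>2)\<^sup>2 - (1 - f2\<^sup>2)\<^sup>2) * (\<alpha> * \<gamma> / 2 * r\<^sup>2)"
    by (simp_all add: algebra_simps)
  ultimately show ?thesis
    unfolding abs_le_iff by linarith
qed

lemma energy_density_gain_u:
  assumes "\<alpha> \<ge> 0" "\<beta> \<ge> 0" "r0 > 0" "r0 / 2 \<le> r"
    and u: "\<bar>u1\<bar> \<le> \<rho>" "\<bar>u2\<bar> \<le> \<rho>" "\<rho> \<le> 1" and "f\<^sup>2 \<le> F"
    and "c\<^sup>2 / 4 \<le> du1\<^sup>2" "du2\<^sup>2 \<le> c\<^sup>2 / 16" and \<rho>: "\<rho>\<^sup>2 * (8 / r0\<^sup>2 + \<alpha> * \<beta> * F) \<le> c\<^sup>2 / 8"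
  shows "energy_density \<alpha> \<beta> \<gamma> du2 u2 df f r + c\<^sup>2 / 4 \<le> energy_density \<alpha> \<beta> \<gamma> du1 u1 df f r"
proof -
  have "2 / r\<^sup>2 \<le> 8 / r0\<^sup>2"
    using power_mono[of "r0 / 2" r 2] assms(3,4) by (simp add: field_simps power_divide)
  then have "\<rho>\<^sup>2 * (2 / r\<^sup>2 + \<alpha> * \<beta> * F) \<le> \<rho>\<^sup>2 * (8 / r0\<^sup>2 + \<alpha> * \<beta> * F)"
    by (intro mult_left_mono) auto
  with energy_density_change_u[OF assms(1,2) u \<open>f\<^sup>2 \<le> F\<close>, of \<gamma> du2 df r du1] \<rho> assms(9,10)
  show ?thesis unfolding right_diff_distrib by linarith
qed

lemma energy_density_gain_f:
  assumes "\<alpha> \<ge> 0" "\<beta> \<ge> 0" "\<gamma> \<ge> 0" "r0 / 2 \<le> r" "r \<le> 3 * r0 / 2"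
    and f: "\<bar>f1\<bar> \<le> \<rho>" "\<bar>f2\<bar> \<le> \<rho>" "\<rho> \<le> 1" and "u\<^sup>2 \<le> U"
    and "c\<^sup>2 / 4 \<le> df1\<^sup>2" "df2\<^sup>2 \<le> c\<^sup>2 / 16"
    and \<rho>: "\<rho>\<^sup>2 * (\<alpha> * \<beta> * U + \<alpha> * \<gamma> * (9 * r0\<^sup>2 / 4)) \<le> \<alpha> * r0\<^sup>2 * c\<^sup>2 / 32"
  shows "energy_density \<alpha> \<beta> \<gamma> du u df2 f2 r + \<alpha> * r0\<^sup>2 * c\<^sup>2 / 64
    \<le> energy_density \<alpha> \<beta> \<gamma> du u df1 f1 r"
proof -
  have "r0\<^sup>2 / 4 \<le> r\<^sup>2" "r\<^sup>2 \<le> 9 * r0\<^sup>2 / 4"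
    using assms(4,5) power_mono[of "r0 / 2" r 2] power_mono[of r "3 * r0 / 2" 2]
    by (auto simp: power_divide power_mult_distrib)
  then have "\<alpha> * (r0\<^sup>2 / 4) * (3 * c\<^sup>2 / 16) \<le> \<alpha> * r\<^sup>2 * (df1\<^sup>2 - df2\<^sup>2)"
    using assms(1,10,11) by (intro mult_mono mult_left_mono) auto
  moreover have "\<rho>\<^sup>2 * (\<alpha> * \<beta> * U + \<alpha> * \<gamma> * r\<^sup>2) \<le> \<rho>\<^sup>2 * (\<alpha> * \<beta> * U + \<alpha> * \<gamma> * (9 * r0\<^sup>2 / 4))"
    using \<open>r\<^sup>2 \<le> 9 * r0\<^sup>2 / 4\<close> assms(1,3) by (intro mult_left_mono add_left_mono) auto
  ultimately show ?thesis
    using energy_density_change_f[OF assms(1-3) f \<open>u\<^sup>2 \<le> U\<close>, of du df2 r df1] \<rho> by linarith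
qed

lemma small_factor_exists:
  fixes K \<eta> :: real
  assumes "\<eta> > 0"
  obtains \<rho> where "0 < \<rho>" "\<rho> \<le> 1" "\<rho>\<^sup>2 * K \<le> \<eta>"
proof -
  have "((\<lambda>\<rho>. \<rho>\<^sup>2 * K) \<longlongrightarrow> 0) (at_right 0)" by real_asymp
  then have "eventually (\<lambda>\<rho>. \<rho>\<^sup>2 * K < \<eta> \<and> \<rho> < 1) (at_right (0::real))"
    using assms by (intro eventually_conj order_tendstoD(2) eventually_at_right_less) auto
  then obtain b where "b > 0" and b: "\<And>\<rho>. 0 < \<rho> \<Longrightarrow> \<rho> < b \<Longrightarrow> \<rho>\<^sup>2 * K < \<eta> \<and> \<rho> < 1"
    by (auto simp: eventually_at_right_field)
  from b[of "b / 2"] \<open>b > 0\<close> show thesis by (intro that[of "b / 2"]) auto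
qed

section \<open>Positivity of least-energy solutions\<close>

lemma continuous_on_Icc_sq_bound:
  fixes g :: "real \<Rightarrow> real"
  assumes "continuous_on {a..b} g"
  obtains B where "\<And>r. r \<in> {a..b} \<Longrightarrow> (g r)\<^sup>2 \<le> B"
proof -
  obtain M where "\<And>r. r \<in> {a..b} \<Longrightarrow> \<bar>g r\<bar> \<le> M"
    using compact_continuous_image[OF assms compact_Icc, THEN compact_imp_bounded]
    by (force simp: bounded_real)
  then show thesis
    using power_mono[of "\<bar>g _\<bar>" M 2] by (intro that[of "M\<^sup>2"]) force
qed

locale profile_odes =
  fixes \<alpha> \<beta> \<gamma> :: real and u u' u'' f f' f'' :: "real \<Rightarrow> real"
  assumes \<alpha>_pos: "\<alpha> > 0" and \<beta>_pos: "\<beta> > 0" and \<gamma>_nonneg: "\<gamma> \<ge> 0"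
    and u_deriv: "\<And>r. r > 0 \<Longrightarrow> (u has_real_derivative u' r) (at r)"
    and u'_deriv: "\<And>r. r > 0 \<Longrightarrow> (u' has_real_derivative u'' r) (at r)"
    and u_ode: "\<And>r. r > 0 \<Longrightarrow> u'' r = \<alpha> * \<beta> / 2 * (f r)\<^sup>2 * u r + u r * ((u r)\<^sup>2 - 1) / r\<^sup>2"
    and f_deriv: "\<And>r. r > 0 \<Longrightarrow> (f has_real_derivative f' r) (at r)"
    and f'_deriv: "\<And>r. r > 0 \<Longrightarrow> (f' has_real_derivative f'' r) (at r)"
    and f_ode: "\<And>r. r > 0 \<Longrightarrow>
                  f'' r = - 2 / r * f' r + \<beta> / r\<^sup>2 * f r * (u r)\<^sup>2 + \<gamma> * f r * ((f r)\<^sup>2 - 1)"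
begin

lemma continuous_on_u: "0 < a \<Longrightarrow> continuous_on {a..b} u"
  by (intro continuous_at_imp_continuous_on ballI DERIV_isCont[OF u_deriv]) auto

lemma continuous_on_f: "0 < a \<Longrightarrow> continuous_on {a..b} f"
  by (intro continuous_at_imp_continuous_on ballI DERIV_isCont[OF f_deriv]) auto

lemma u_vanishing:
  assumes "r0 > 0" "u r0 = 0" "u' r0 = 0" "r > 0"
  shows "u r = 0"
proof (rule linear_ode_vanishing[of "min r r0" "max r r0" u u' "\<lambda>_. 0"
      "\<lambda>t. \<alpha> * \<beta> / 2 * (f t)\<^sup>2 + ((u t)\<^sup>2 - 1) / t\<^sup>2" r0])
  fix t assume "t \<in> {min r r0..max r r0}"
  then have "t > 0" using assms by auto
  show "(u has_real_derivative u' t) (at t)" using u_deriv[OF \<open>t > 0\<close>] .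
  show "(u' has_real_derivative 0 * u' t + (\<alpha> * \<beta> / 2 * (f t)\<^sup>2 + ((u t)\<^sup>2 - 1) / t\<^sup>2) * u t) (at t)"
    using u'_deriv[OF \<open>t > 0\<close>] u_ode[OF \<open>t > 0\<close>] by (simp add: algebra_simps diff_divide_distrib)
next
  show "continuous_on {min r r0..max r r0} (\<lambda>t. \<alpha> * \<beta> / 2 * (f t)\<^sup>2 + ((u t)\<^sup>2 - 1) / t\<^sup>2)"
    using assms continuous_on_u continuous_on_f by (intro continuous_intros) auto
qed (use assms in auto)

lemma f_vanishing:
  assumes "r0 > 0" "f r0 = 0" "f' r0 = 0" "r > 0"
  shows "f r = 0"
proof (rule linear_ode_vanishing[of "min r r0" "max r r0" f f' "\<lambda>t. - 2 / t"
      "\<lambda>t. \<beta> / t\<^sup>2 * (u t)\<^sup>2 + \<gamma> * ((f t)\<^sup>2 - 1)" r0])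
  fix t assume "t \<in> {min r r0..max r r0}"
  then have "t > 0" using assms by auto
  show "(f has_real_derivative f' t) (at t)" using f_deriv[OF \<open>t > 0\<close>] .
  show "(f' has_real_derivative - 2 / t * f' t + (\<beta> / t\<^sup>2 * (u t)\<^sup>2 + \<gamma> * ((f t)\<^sup>2 - 1)) * f t) (at t)"
    using f'_deriv[OF \<open>t > 0\<close>] f_ode[OF \<open>t > 0\<close>] by (simp add: algebra_simps)
next
  show "continuous_on {min r r0..max r r0} (\<lambda>t. - 2 / t)"
    using assms by (intro continuous_intros) auto
  show "continuous_on {min r r0..max r r0} (\<lambda>t. \<beta> / t\<^sup>2 * (u t)\<^sup>2 + \<gamma> * ((f t)\<^sup>2 - 1))"
    using assms continuous_on_u continuous_on_f by (intro continuous_intros) auto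
qed (use assms in auto)

end

locale least_energy_solution = profile_odes +
  assumes admissible: "admissible \<alpha> \<beta> \<gamma> u f"
    and minimizer: "\<And>v g. admissible \<alpha> \<beta> \<gamma> v g \<Longrightarrow> energy \<alpha> \<beta> \<gamma> u f \<le> energy \<alpha> \<beta> \<gamma> v g"
begin

lemma boundary_limits:
  "(u \<longlongrightarrow> 1) (at_right 0)" "(f \<longlongrightarrow> 0) (at_right 0)" "(u \<longlongrightarrow> 0) at_top" "(f \<longlongrightarrow> 1) at_top"
  using admissible by (auto simp: admissible_def)

lemma competitor_not_better:
  assumes "loc_abs_cont v" "loc_abs_cont g"
    and "(g \<longlongrightarrow> 0) (at_right 0)" "(v \<longlongrightarrow> 1) (at_right 0)" "(g \<longlongrightarrow> 1) at_top" "(v \<longlongrightarrow> 0) at_top"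
  shows "\<not> energy \<alpha> \<beta> \<gamma> v g < energy \<alpha> \<beta> \<gamma> u f"
proof
  assume less: "energy \<alpha> \<beta> \<gamma> v g < energy \<alpha> \<beta> \<gamma> u f"
  then have "admissible \<alpha> \<beta> \<gamma> v g"
    using assms admissible by (auto simp: admissible_def)
  with minimizer less show False by (simp add: not_le[symmetric])
qed

lemma sign_switch_u_not_better:
  assumes "0 < a" "a < b"
  shows "\<not> energy \<alpha> \<beta> \<gamma> (sign_switch u a b) f < energy \<alpha> \<beta> \<gamma> u f"
proof (rule competitor_not_better)
  show "loc_abs_cont (sign_switch u a b)"
    using assms by (intro sign_switch_loc_abs_cont[OF _ _ u_deriv] DERIV_isCont[OF u'_deriv]) auto
  show "(sign_switch u a b \<longlongrightarrow> 1) (at_right 0)"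
    using assms by (intro sign_switch_tendsto_at_right_0 boundary_limits)
  show "(sign_switch u a b \<longlongrightarrow> 0) at_top"
    using tendsto_minus[OF boundary_limits(3)] by (intro sign_switch_tendsto_at_top) simp
qed (use admissible boundary_limits in \<open>auto simp: admissible_def\<close>)

text \<open>Switching the sign of \<open>-f\<close> rather than \<open>f\<close> keeps the limits 0 at the origin and 1 at
  infinity.\<close>
lemma sign_switch_minus_f_not_better:
  assumes "0 < a" "a < b"
  shows "\<not> energy \<alpha> \<beta> \<gamma> u (sign_switch (\<lambda>r. - f r) a b) < energy \<alpha> \<beta> \<gamma> u f"
proof (rule competitor_not_better)
  show "loc_abs_cont (sign_switch (\<lambda>r. - f r) a b)"
    using assms by (intro sign_switch_loc_abs_cont[where w' = "\<lambda>r. - f' r"] DERIV_minus f_deriv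
        isCont_minus DERIV_isCont[OF f'_deriv]) auto
  show "(sign_switch (\<lambda>r. - f r) a b \<longlongrightarrow> 0) (at_right 0)"
    using tendsto_minus[OF boundary_limits(2)] assms by (intro sign_switch_tendsto_at_right_0) auto
  show "(sign_switch (\<lambda>r. - f r) a b \<longlongrightarrow> 1) at_top"
    using boundary_limits(4) by (intro sign_switch_tendsto_at_top) simp
qed (use admissible boundary_limits in \<open>auto simp: admissible_def\<close>)

lemma u_zero_imp_u'_zero:
  assumes "r0 > 0" "u r0 = 0"
  shows "u' r0 = 0"
proof (rule ccontr)
  assume "u' r0 \<noteq> 0"
  define c where "c = u' r0"
  obtain F where F: "\<And>r. r \<in> {r0 / 2..3 * r0 / 2} \<Longrightarrow> (f r)\<^sup>2 \<le> F"
    using continuous_on_Icc_sq_bound[OF continuous_on_f] \<open>r0 > 0\<close> by (metis half_gt_zero)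
  obtain \<rho> where \<rho>: "0 < \<rho>" "\<rho> \<le> 1" "\<rho>\<^sup>2 * (8 / r0\<^sup>2 + \<alpha> * \<beta> * F) \<le> c\<^sup>2 / 8"
    using small_factor_exists[of "c\<^sup>2 / 8"] \<open>u' r0 \<noteq> 0\<close> by (auto simp: c_def)
  obtain a b where ab: "r0 / 2 \<le> a" "a < b" "b \<le> 3 * r0 / 2"
    and near: "\<And>r. a \<le> r \<Longrightarrow> r \<le> b \<Longrightarrow>
                 \<bar>u r\<bar> \<le> \<rho> \<and> \<bar>sign_switch u a b r\<bar> \<le> \<rho> \<and> c\<^sup>2 / 4 \<le> (u' r)\<^sup>2"
    and flat: "\<And>r. a < r \<Longrightarrow> r < b \<Longrightarrow> (deriv (sign_switch u a b) r)\<^sup>2 \<le> c\<^sup>2 / 16"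
    using sign_switch_near_transversal_zero[OF u_deriv DERIV_isCont[OF u'_deriv[OF \<open>r0 > 0\<close>]]
        assms \<open>u' r0 \<noteq> 0\<close> \<rho>(1)] unfolding c_def by blast
  define v where "v = sign_switch u a b"
  have "energy \<alpha> \<beta> \<gamma> v f < energy \<alpha> \<beta> \<gamma> u f"
  proof (rule energy_less_by_density_gap[where \<eta> = "c\<^sup>2 / 4"])
    fix r :: real assume "r > 0" and out: "r < a \<or> b < r"
    from sign_switch_squares_outside[where w' = u', OF u_deriv[OF \<open>r > 0\<close>] out ab(2)]
    show "energy_density \<alpha> \<beta> \<gamma> (deriv v r) (v r) (deriv f r) (f r) r =
        energy_density \<alpha> \<beta> \<gamma> (deriv u r) (u r) (deriv f r) (f r) r"
      by (simp add: energy_density_def v_def DERIV_imp_deriv[OF u_deriv[OF \<open>r > 0\<close>]])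
  next
    fix r :: real assume r: "a < r" "r < b"
    then have "r > 0" "r0 / 2 \<le> r" using ab assms by auto
    then show "energy_density \<alpha> \<beta> \<gamma> (deriv v r) (v r) (deriv f r) (f r) r + c\<^sup>2 / 4
        \<le> energy_density \<alpha> \<beta> \<gamma> (deriv u r) (u r) (deriv f r) (f r) r"
      using near[of r] flat[OF r] r F[of r] ab assms \<alpha>_pos \<beta>_pos \<rho>
        DERIV_imp_deriv[OF u_deriv[OF \<open>r > 0\<close>]]
      by (intro energy_density_gain_u) (auto simp: v_def)
  qed (use \<alpha>_pos \<beta>_pos \<gamma>_nonneg admissible ab assms \<open>u' r0 \<noteq> 0\<close> in
       \<open>auto simp: admissible_def c_def\<close>)
  moreover have "\<not> energy \<alpha> \<beta> \<gamma> v f < energy \<alpha> \<beta> \<gamma> u f"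
    unfolding v_def using ab assms by (intro sign_switch_u_not_better) auto
  ultimately show False by simp
qed

lemma f_zero_imp_f'_zero:
  assumes "r0 > 0" "f r0 = 0"
  shows "f' r0 = 0"
proof (rule ccontr)
  assume "f' r0 \<noteq> 0"
  define c where "c = f' r0"
  obtain U where U: "\<And>r. r \<in> {r0 / 2..3 * r0 / 2} \<Longrightarrow> (u r)\<^sup>2 \<le> U"
    using continuous_on_Icc_sq_bound[OF continuous_on_u] \<open>r0 > 0\<close> by (metis half_gt_zero)
  obtain \<rho> where \<rho>: "0 < \<rho>" "\<rho> \<le> 1"
    "\<rho>\<^sup>2 * (\<alpha> * \<beta> * U + \<alpha> * \<gamma> * (9 * r0\<^sup>2 / 4)) \<le> \<alpha> * r0\<^sup>2 * c\<^sup>2 / 32"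
    using small_factor_exists[of "\<alpha> * r0\<^sup>2 * c\<^sup>2 / 32"] \<open>f' r0 \<noteq> 0\<close> \<alpha>_pos assms
    by (auto simp: c_def)
  have w_deriv: "((\<lambda>r. - f r) has_real_derivative - f' r) (at r)" if "r > 0" for r
    using f_deriv[OF that] by (rule DERIV_minus)
  have "isCont (\<lambda>r. - f' r) r0"
    using DERIV_isCont[OF f'_deriv[OF \<open>r0 > 0\<close>]] by (rule isCont_minus)
  then obtain a b where ab: "r0 / 2 \<le> a" "a < b" "b \<le> 3 * r0 / 2"
    and near: "\<And>r. a \<le> r \<Longrightarrow> r \<le> b \<Longrightarrow>
       \<bar>f r\<bar> \<le> \<rho> \<and> \<bar>sign_switch (\<lambda>r. - f r) a b r\<bar> \<le> \<rho> \<and> c\<^sup>2 / 4 \<le> (f' r)\<^sup>2"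
    and flat: "\<And>r. a < r \<Longrightarrow> r < b \<Longrightarrow> (deriv (sign_switch (\<lambda>r. - f r) a b) r)\<^sup>2 \<le> c\<^sup>2 / 16"
    using sign_switch_near_transversal_zero[OF w_deriv, of r0 \<rho>] assms \<open>f' r0 \<noteq> 0\<close> \<rho>(1)
    unfolding c_def by auto
  define g where "g = sign_switch (\<lambda>r. - f r) a b"
  have "energy \<alpha> \<beta> \<gamma> u g < energy \<alpha> \<beta> \<gamma> u f"
  proof (rule energy_less_by_density_gap[where \<eta> = "\<alpha> * r0\<^sup>2 * c\<^sup>2 / 64"])
    fix r :: real assume "r > 0" and out: "r < a \<or> b < r"
    from sign_switch_squares_outside[where w' = "\<lambda>r. - f' r", OF w_deriv[OF \<open>r > 0\<close>] out ab(2)]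
    show "energy_density \<alpha> \<beta> \<gamma> (deriv u r) (u r) (deriv g r) (g r) r =
        energy_density \<alpha> \<beta> \<gamma> (deriv u r) (u r) (deriv f r) (f r) r"
      by (simp add: energy_density_def g_def DERIV_imp_deriv[OF f_deriv[OF \<open>r > 0\<close>]])
  next
    fix r :: real assume r: "a < r" "r < b"
    then have "r > 0" using ab assms by auto
    with r show "energy_density \<alpha> \<beta> \<gamma> (deriv u r) (u r) (deriv g r) (g r) r + \<alpha> * r0\<^sup>2 * c\<^sup>2 / 64
        \<le> energy_density \<alpha> \<beta> \<gamma> (deriv u r) (u r) (deriv f r) (f r) r"
      using near[of r] flat[OF r] U[of r] ab \<alpha>_pos \<beta>_pos \<gamma>_nonneg \<rho>
        DERIV_imp_deriv[OF f_deriv[OF \<open>r > 0\<close>]]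
      by (intro energy_density_gain_f) (auto simp: g_def)
  qed (use \<alpha>_pos \<beta>_pos \<gamma>_nonneg admissible ab assms \<open>f' r0 \<noteq> 0\<close> in
       \<open>auto simp: admissible_def c_def\<close>)
  moreover have "\<not> energy \<alpha> \<beta> \<gamma> u g < energy \<alpha> \<beta> \<gamma> u f"
    unfolding g_def using ab assms by (intro sign_switch_minus_f_not_better) auto
  ultimately show False by simp
qed

lemma u_pos:
  assumes "r > 0"
  shows "u r > 0"
proof (rule ccontr)
  assume "\<not> u r > 0"
  have "eventually (\<lambda>s. u s > 1 / 2) (at_right 0)"
    using boundary_limits(1) by (rule order_tendstoD) simp
  then obtain e where "e > 0" and e: "\<And>s. 0 < s \<Longrightarrow> s < e \<Longrightarrow> u s > 1 / 2"
    by (auto simp: eventually_at_right_field)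
  define s where "s = min (e / 2) r"
  have s: "0 < s" "s \<le> r" "u s > 1 / 2"
    using assms \<open>e > 0\<close> e[of s] by (auto simp: s_def)
  have "\<exists>r0. s \<le> r0 \<and> r0 \<le> r \<and> u r0 = 0"
    using s \<open>\<not> u r > 0\<close> continuous_on_u[OF s(1)] by (intro IVT2'[where f = u]) auto
  then obtain r0 where "s \<le> r0" "u r0 = 0" by blast
  with s have "r0 > 0" by simp
  then have "u s = 0"
    using u_vanishing[OF _ \<open>u r0 = 0\<close> u_zero_imp_u'_zero s(1)] \<open>u r0 = 0\<close> by blast
  with s show False by simp
qed

lemma f_pos:
  assumes "r > 0"
  shows "f r > 0"
proof (rule ccontr)
  assume "\<not> f r > 0"
  have "eventually (\<lambda>s. f s > 1 / 2) at_top"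
    using boundary_limits(4) by (rule order_tendstoD) simp
  then obtain R where R: "\<And>s. s \<ge> R \<Longrightarrow> f s > 1 / 2"
    by (auto simp: eventually_at_top_linorder)
  define s where "s = max R r"
  have s: "r \<le> s" "f s > 1 / 2" using R[of s] by (auto simp: s_def)
  have "\<exists>r0. r \<le> r0 \<and> r0 \<le> s \<and> f r0 = 0"
    using s \<open>\<not> f r > 0\<close> continuous_on_f[OF assms] by (intro IVT'[where f = f]) auto
  then obtain r0 where "r \<le> r0" "f r0 = 0" by blast
  with assms have "r0 > 0" by simp
  moreover have "s > 0" using s assms by simp
  ultimately have "f s = 0"
    using f_vanishing[OF _ \<open>f r0 = 0\<close> f_zero_imp_f'_zero] \<open>f r0 = 0\<close> by blast
  with s show False by simp
qed

lemma u_less_1: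
  assumes "r > 0"
  shows "u r < 1"
proof -
  have "u r - 1 < 0"
  proof (rule max_principle_Ioi[where d = "\<lambda>r. u r - 1" and d' = u' and d'' = u'' and a = 0
        and La = 0 and Lb = "- 1"])
    fix s :: real assume "s > 0"
    show "((\<lambda>r. u r - 1) has_real_derivative u' s) (at s)"
      using u_deriv[OF \<open>s > 0\<close>] by (auto intro!: derivative_eq_intros)
    show "(u' has_real_derivative u'' s) (at s)" using u'_deriv[OF \<open>s > 0\<close>] .
    assume "u s - 1 \<ge> 0" "u' s = 0"
    then have "u s * ((u s)\<^sup>2 - 1) / s\<^sup>2 \<ge> 0" by (simp add: one_le_power)
    moreover have "\<alpha> * \<beta> / 2 * (f s)\<^sup>2 * u s > 0"
      using \<alpha>_pos \<beta>_pos f_pos[OF \<open>s > 0\<close>] \<open>u s - 1 \<ge> 0\<close> by simp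
    ultimately show "u'' s > 0" using u_ode[OF \<open>s > 0\<close>] by simp
  qed (use assms tendsto_diff[OF boundary_limits(1) tendsto_const[of 1]]
      tendsto_diff[OF boundary_limits(3) tendsto_const[of 1]] in auto)
  then show ?thesis by simp
qed

lemma f_less_1:
  assumes "r > 0"
  shows "f r < 1"
proof -
  have "f r - 1 < 0"
  proof (rule max_principle_Ioi[where d = "\<lambda>r. f r - 1" and d' = f' and d'' = f'' and a = 0
        and La = "- 1" and Lb = 0])
    fix s :: real assume "s > 0"
    show "((\<lambda>r. f r - 1) has_real_derivative f' s) (at s)"
      using f_deriv[OF \<open>s > 0\<close>] by (auto intro!: derivative_eq_intros)
    show "(f' has_real_derivative f'' s) (at s)" using f'_deriv[OF \<open>s > 0\<close>] .
    assume "f s - 1 \<ge> 0" "f' s = 0"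
    then have "\<gamma> * f s * ((f s)\<^sup>2 - 1) \<ge> 0" using \<gamma>_nonneg by (simp add: one_le_power)
    moreover have "\<beta> / s\<^sup>2 * f s * (u s)\<^sup>2 > 0"
      using \<beta>_pos f_pos[OF \<open>s > 0\<close>] u_pos[OF \<open>s > 0\<close>] \<open>s > 0\<close> by simp
    ultimately show "f'' s > 0" using f_ode[OF \<open>s > 0\<close>] \<open>f' s = 0\<close> by simp
  qed (use assms tendsto_diff[OF boundary_limits(2) tendsto_const[of 1]]
      tendsto_diff[OF boundary_limits(4) tendsto_const[of 1]] in auto)
  then show ?thesis by simp
qed

end

section \<open>Decay rates\<close>

lemma bigo_at_top_of_bound:
  fixes g h :: "real \<Rightarrow> real"
  assumes "\<And>r. r > R \<Longrightarrow> \<bar>g r\<bar> \<le> C * \<bar>h r\<bar>"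
  shows "g \<in> O[at_top](h)"
  using assms by (intro bigoI[of _ C] eventually_mono[OF eventually_gt_at_top[of R]]) auto

lemma bigo_at_right_0_of_bound:
  fixes g h :: "real \<Rightarrow> real"
  assumes "R > 0" "\<And>r. 0 < r \<Longrightarrow> r < R \<Longrightarrow> \<bar>g r\<bar> \<le> C * \<bar>h r\<bar>"
  shows "g \<in> O[at_right 0](h)"
  using assms by (intro bigoI[of _ C]) (auto simp: eventually_at_right_field)

lemma exp_barrier_at_top:
  fixes w w' w'' :: "real \<Rightarrow> real"
  assumes "m > 0"
    and D1: "\<And>r. r \<ge> R \<Longrightarrow> (w has_real_derivative w' r) (at r)"
    and D2: "\<And>r. r > R \<Longrightarrow> (w' has_real_derivative w'' r) (at r)"
    and "(w \<longlongrightarrow> 0) at_top" "w R < C * exp (- m * R)"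
    and super: "\<And>r. r > R \<Longrightarrow> w r \<ge> C * exp (- m * r) \<Longrightarrow> w' r = - m * C * exp (- m * r) \<Longrightarrow>
                  w'' r > m\<^sup>2 * C * exp (- m * r)"
    and "r > R"
  shows "w r < C * exp (- m * r)"
proof -
  define d where "d r = w r - C * exp (- m * r)" for r
  have "d r < 0"
  proof (rule max_principle_Ioi[where d = d and a = R and d' = "\<lambda>r. w' r + m * C * exp (- m * r)"
        and d'' = "\<lambda>r. w'' r - m\<^sup>2 * C * exp (- m * r)" and La = "d R" and Lb = 0])
    fix s assume "s > R"
    show "(d has_real_derivative w' s + m * C * exp (- m * s)) (at s)"
      unfolding d_def using \<open>s > R\<close> by (auto intro!: derivative_eq_intros D1)
    show "((\<lambda>r. w' r + m * C * exp (- m * r)) has_real_derivative w'' s - m\<^sup>2 * C * exp (- m * s)) (at s)"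
      using \<open>s > R\<close> by (auto intro!: derivative_eq_intros D2 simp: power2_eq_square)
    show "d s \<ge> 0 \<Longrightarrow> w' s + m * C * exp (- m * s) = 0 \<Longrightarrow> w'' s - m\<^sup>2 * C * exp (- m * s) > 0"
      using super[OF \<open>s > R\<close>] by (simp add: d_def)
  next
    have "isCont d R" unfolding d_def by (intro continuous_intros DERIV_isCont[OF D1]) simp
    then show "(d \<longlongrightarrow> d R) (at_right R)" by (simp add: isCont_def filterlim_at_split)
    have "((\<lambda>r. C * exp (- m * r)) \<longlongrightarrow> 0) at_top" using \<open>m > 0\<close> by real_asymp
    from tendsto_diff[OF \<open>(w \<longlongrightarrow> 0) at_top\<close> this] show "(d \<longlongrightarrow> 0) at_top"
      by (simp add: d_def[abs_def])
  qed (use assms in \<open>auto simp: d_def\<close>)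
  then show ?thesis by (simp add: d_def)
qed

lemma powr_barrier_at_0:
  fixes w w' w'' :: "real \<Rightarrow> real"
  assumes "p > 0" "R > 0"
    and D1: "\<And>r. 0 < r \<Longrightarrow> r \<le> R \<Longrightarrow> (w has_real_derivative w' r) (at r)"
    and D2: "\<And>r. 0 < r \<Longrightarrow> r < R \<Longrightarrow> (w' has_real_derivative w'' r) (at r)"
    and "(w \<longlongrightarrow> 0) (at_right 0)" "w R < C * R powr p"
    and super: "\<And>r. 0 < r \<Longrightarrow> r < R \<Longrightarrow> w r \<ge> C * r powr p \<Longrightarrow> w' r = C * p * r powr (p - 1) \<Longrightarrow>
                  w'' r > C * p * (p - 1) * r powr (p - 2)"
    and "0 < r" "r < R"
  shows "w r < C * r powr p"
proof -
  define d where "d r = w r - C * r powr p" for r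
  have "d r < 0"
  proof (rule max_principle_Ioo[where d = d and a = 0 and b = R
        and d' = "\<lambda>r. w' r - C * p * r powr (p - 1)"
        and d'' = "\<lambda>r. w'' r - C * p * (p - 1) * r powr (p - 2)" and La = 0 and Lb = "d R"])
    fix s assume s: "0 < s" "s < R"
    show "(d has_real_derivative w' s - C * p * s powr (p - 1)) (at s)"
      unfolding d_def using s by (auto intro!: derivative_eq_intros D1)
    show "((\<lambda>r. w' r - C * p * r powr (p - 1)) has_real_derivative
        w'' s - C * p * (p - 1) * s powr (p - 2)) (at s)"
      using s by (auto intro!: derivative_eq_intros D2 simp: algebra_simps)
    show "d s \<ge> 0 \<Longrightarrow> w' s - C * p * s powr (p - 1) = 0 \<Longrightarrow>
        w'' s - C * p * (p - 1) * s powr (p - 2) > 0"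
      using super[OF s] by (simp add: d_def)
  next
    have "isCont d R" unfolding d_def using \<open>R > 0\<close> by (intro continuous_intros DERIV_isCont[OF D1]) auto
    then show "(d \<longlongrightarrow> d R) (at_left R)" by (simp add: isCont_def filterlim_at_split)
    have "((\<lambda>r. C * r powr p) \<longlongrightarrow> 0) (at_right 0)" using \<open>p > 0\<close> by real_asymp
    from tendsto_diff[OF \<open>(w \<longlongrightarrow> 0) (at_right 0)\<close> this] show "(d \<longlongrightarrow> 0) (at_right 0)"
      by (simp add: d_def[abs_def])
  qed (use assms in \<open>auto simp: d_def\<close>)
  then show ?thesis by (simp add: d_def)
qed

lemma powr_eq_sq_mult_powr:
  fixes s q :: real
  assumes "s > 0"
  shows "s powr q = s\<^sup>2 * s powr (q - 2)"
  using powr_add[of s "q - 2" 2] powr_realpow[OF assms, of 2] by simp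

locale bounded_solution = profile_odes +
  assumes u_at_0: "(u \<longlongrightarrow> 1) (at_right 0)" and f_at_0: "(f \<longlongrightarrow> 0) (at_right 0)"
    and u_at_top: "(u \<longlongrightarrow> 0) at_top" and f_at_top: "(f \<longlongrightarrow> 1) at_top"
    and u_bounds: "\<And>r. r > 0 \<Longrightarrow> 0 < u r \<and> u r < 1"
    and f_bounds: "\<And>r. r > 0 \<Longrightarrow> 0 < f r \<and> f r < 1"

sublocale least_energy_solution \<subseteq> bounded_solution
  using boundary_limits u_pos u_less_1 f_pos f_less_1 by unfold_locales auto

context bounded_solution
begin

lemma u_decay:
  assumes "0 < k" "k < sqrt (\<alpha> * \<beta> / 2)"
  shows "u \<in> O[at_top](\<lambda>r. exp (- k * r))"
proof -
  have "k\<^sup>2 < \<alpha> * \<beta> / 2"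
    using power_strict_mono[OF assms(2), of 2] assms(1) \<alpha>_pos \<beta>_pos by simp
  moreover have "((\<lambda>r. \<alpha> * \<beta> / 2 * (f r)\<^sup>2 - 1 / r\<^sup>2) \<longlongrightarrow> \<alpha> * \<beta> / 2 * 1\<^sup>2 - 0) at_top"
    by (intro tendsto_intros f_at_top) real_asymp
  ultimately have "eventually (\<lambda>r. \<alpha> * \<beta> / 2 * (f r)\<^sup>2 - 1 / r\<^sup>2 > k\<^sup>2) at_top"
    by (intro order_tendstoD(1)) auto
  then obtain R0 where R0: "\<And>r. r \<ge> R0 \<Longrightarrow> \<alpha> * \<beta> / 2 * (f r)\<^sup>2 - 1 / r\<^sup>2 > k\<^sup>2"
    by (auto simp: eventually_at_top_linorder)
  define R where "R = max R0 1"
  have "R > 0" "R \<ge> R0" by (auto simp: R_def)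
  define C where "C = u R * exp (k * R) + 1"
  have "u r < C * exp (- k * r)" if "r > R" for r
  proof (rule exp_barrier_at_top[OF \<open>k > 0\<close> u_deriv u'_deriv u_at_top _ _ that])
    show "u R < C * exp (- k * R)" by (simp add: C_def algebra_simps exp_minus_inverse)
    fix s assume "s > R" "u s \<ge> C * exp (- k * s)"
    then have "s > 0" using \<open>R > 0\<close> by simp
    have "\<alpha> * \<beta> / 2 * (f s)\<^sup>2 + ((u s)\<^sup>2 - 1) / s\<^sup>2 > k\<^sup>2"
      using R0[of s] \<open>s > R\<close> \<open>R \<ge> R0\<close> zero_le_power2[of "u s"]
      by (simp add: diff_divide_distrib) (smt (verit) divide_nonneg_nonneg zero_le_power2)
    then have "u'' s > k\<^sup>2 * u s"
      using u_ode[OF \<open>s > 0\<close>] u_bounds[OF \<open>s > 0\<close>] mult_strict_right_mono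
      by (fastforce simp: algebra_simps diff_divide_distrib)
    moreover have "k\<^sup>2 * u s \<ge> k\<^sup>2 * (C * exp (- k * s))"
      using \<open>u s \<ge> C * exp (- k * s)\<close> by (intro mult_left_mono) auto
    ultimately show "u'' s > k\<^sup>2 * C * exp (- k * s)" by (simp add: algebra_simps)
  qed (use \<open>R > 0\<close> in auto)
  then have "\<bar>u r\<bar> \<le> C * \<bar>exp (- k * r)\<bar>" if "r > R" for r
    using u_bounds[of r] that \<open>R > 0\<close> by force
  then show ?thesis by (rule bigo_at_top_of_bound)
qed

lemma u_sq_exp_bound:
  assumes "0 < k" "k < sqrt (\<alpha> * \<beta> / 2)"
  obtains B R where "R > 0" "B \<ge> 0" "\<And>r. r \<ge> R \<Longrightarrow> (u r)\<^sup>2 \<le> B * exp (- (2 * k) * r)"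
proof -
  obtain c where "eventually (\<lambda>r. norm (u r) \<le> c * norm (exp (- k * r))) at_top"
    using landau_o.bigE[OF u_decay[OF assms]] by blast
  then obtain R0 where R0: "\<And>r. r \<ge> R0 \<Longrightarrow> \<bar>u r\<bar> \<le> c * exp (- k * r)"
    by (auto simp: eventually_at_top_linorder)
  have "(u r)\<^sup>2 \<le> c\<^sup>2 * exp (- (2 * k) * r)" if "r \<ge> max R0 1" for r
  proof -
    have "(u r)\<^sup>2 \<le> (c * exp (- k * r))\<^sup>2"
      using power_mono[OF R0[of r], of 2] that by simp
    also have "\<dots> = c\<^sup>2 * exp (- (2 * k) * r)"
      by (simp add: power_mult_distrib power2_eq_square flip: exp_add)
    finally show ?thesis .
  qed
  then show thesis by (intro that[of "max R0 1" "c\<^sup>2"]) auto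
qed


lemma minus_f''_lower_bound:
  assumes "s \<ge> 1" "f' s \<ge> 0"
  shows "\<gamma> * f s * (1 + f s) * (1 - f s) - \<beta> * (u s)\<^sup>2 \<le> - f'' s"
proof -
  have "s > 0" using assms by simp
  have "\<beta> / s\<^sup>2 * f s * (u s)\<^sup>2 \<le> \<beta> * 1 * (u s)\<^sup>2"
    using \<beta>_pos assms(1) f_bounds[OF \<open>s > 0\<close>]
    by (intro mult_right_mono mult_mono) (auto simp: divide_le_eq one_le_power)
  moreover have "2 / s * f' s \<ge> 0" using assms by simp
  moreover have "- f'' s = 2 / s * f' s - \<beta> / s\<^sup>2 * f s * (u s)\<^sup>2 + \<gamma> * f s * (1 + f s) * (1 - f s)"
    using f_ode[OF \<open>s > 0\<close>] by (simp add: algebra_simps power2_eq_square)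
  ultimately show ?thesis by linarith
qed

lemma one_minus_f_exp_bound:
  assumes "0 < m" "m\<^sup>2 < 2 * \<gamma>" "m\<^sup>2 < 2 * (\<alpha> * \<beta>)"
  obtains R C where "\<And>r. r > R \<Longrightarrow> 1 - f r < C * exp (- m * r)"
proof -
  have "m / 2 < sqrt (\<alpha> * \<beta> / 2)" using assms(3) by (intro real_less_rsqrt) (simp add: power_divide)
  then obtain B R1 where "B \<ge> 0"
    and u2: "\<And>r. r \<ge> R1 \<Longrightarrow> (u r)\<^sup>2 \<le> B * exp (- (2 * (m / 2)) * r)"
    using u_sq_exp_bound[of "m / 2"] assms(1) by (metis half_gt_zero)
  define \<theta> where "\<theta> = 2 * \<gamma> - m\<^sup>2"
  have "\<theta> > 0" using assms(2) by (simp add: \<theta>_def)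
  have "((\<lambda>r. \<gamma> * f r * (1 + f r)) \<longlongrightarrow> \<gamma> * 1 * (1 + 1)) at_top"
    by (intro tendsto_intros f_at_top)
  moreover have "m\<^sup>2 + \<theta> / 2 < \<gamma> * 1 * (1 + 1)" using \<open>\<theta> > 0\<close> by (simp add: \<theta>_def field_simps)
  ultimately have "eventually (\<lambda>r. \<gamma> * f r * (1 + f r) > m\<^sup>2 + \<theta> / 2) at_top"
    by (rule order_tendstoD(1))
  then obtain R2 where R2: "\<And>r. r \<ge> R2 \<Longrightarrow> \<gamma> * f r * (1 + f r) > m\<^sup>2 + \<theta> / 2"
    by (auto simp: eventually_at_top_linorder)
  define R where "R = max (max R1 R2) 1"
  have R: "R \<ge> R1" "R \<ge> R2" "R \<ge> 1" by (auto simp: R_def)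
  define C where "C = 2 * \<beta> * B / \<theta> + exp (m * R)"
  have "\<theta> / 2 * C > \<beta> * B" using \<open>\<theta> > 0\<close> by (simp add: C_def field_simps)
  have "C \<ge> exp (m * R)" using \<open>\<theta> > 0\<close> \<beta>_pos \<open>B \<ge> 0\<close> by (simp add: C_def)
  then have "C > 0" using exp_gt_zero[of "m * R"] by linarith
  have "1 - f r < C * exp (- m * r)" if "r > R" for r
  proof (rule exp_barrier_at_top[OF \<open>m > 0\<close>, where w' = "\<lambda>r. - f' r" and w'' = "\<lambda>r. - f'' r"])
    show "((\<lambda>r. 1 - f r) \<longlongrightarrow> 0) at_top" using tendsto_diff[OF tendsto_const[of 1] f_at_top] by simp
    have "exp (m * R) * exp (- m * R) \<le> C * exp (- m * R)"
      using \<open>C \<ge> exp (m * R)\<close> by (intro mult_right_mono) auto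
    then show "1 - f R < C * exp (- m * R)" using f_bounds[of R] R by (simp add: exp_minus_inverse)
    fix s assume "s > R" and above: "1 - f s \<ge> C * exp (- m * s)"
      and slope: "- f' s = - m * C * exp (- m * s)"
    define E where "E = exp (- m * s)"
    have "s \<ge> 1" "E > 0" using \<open>s > R\<close> R by (auto simp: E_def)
    then have "\<gamma> * f s * (1 + f s) * (1 - f s) - \<beta> * (u s)\<^sup>2 \<le> - f'' s"
      using slope \<open>m > 0\<close> \<open>C > 0\<close> by (intro minus_f''_lower_bound) (auto simp: E_def)
    moreover have "\<beta> * (u s)\<^sup>2 \<le> \<beta> * (B * E)"
      using u2[of s] \<open>s > R\<close> R \<beta>_pos by (intro mult_left_mono) (auto simp: E_def)
    moreover have "\<gamma> * f s * (1 + f s) * (1 - f s) \<ge> (m\<^sup>2 + \<theta> / 2) * (C * E)"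
      using R2[of s] \<open>s > R\<close> R above f_bounds[of s] \<gamma>_nonneg \<open>E > 0\<close> \<open>C > 0\<close>
      by (intro mult_mono) (auto simp: E_def)
    moreover have "(m\<^sup>2 + \<theta> / 2) * (C * E) = m\<^sup>2 * C * E + (\<theta> / 2 * C - \<beta> * B) * E + \<beta> * (B * E)"
      by (simp add: algebra_simps)
    moreover have "(\<theta> / 2 * C - \<beta> * B) * E > 0" using \<open>\<theta> / 2 * C > \<beta> * B\<close> \<open>E > 0\<close> by simp
    ultimately show "- f'' s > m\<^sup>2 * C * exp (- m * s)" unfolding E_def[symmetric] by linarith
  qed (use that R f_deriv f'_deriv in \<open>auto intro!: derivative_eq_intros\<close>)
  then show thesis by (rule that)
qed

lemma f_decay:
  assumes "\<gamma> > 0" "0 < m" "m < sqrt 2 * min (sqrt \<gamma>) (sqrt (\<alpha> * \<beta>))"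
  shows "(\<lambda>r. f r - 1) \<in> O[at_top](\<lambda>r. exp (- m * r))"
proof -
  have "m\<^sup>2 < 2 * (min (sqrt \<gamma>) (sqrt (\<alpha> * \<beta>)))\<^sup>2"
    using power_strict_mono[OF assms(3), of 2] assms(2) by (simp add: power_mult_distrib)
  moreover have "(min (sqrt \<gamma>) (sqrt (\<alpha> * \<beta>)))\<^sup>2 \<le> \<gamma>" "(min (sqrt \<gamma>) (sqrt (\<alpha> * \<beta>)))\<^sup>2 \<le> \<alpha> * \<beta>"
    using assms(1) \<alpha>_pos \<beta>_pos by (auto simp: min_def)
  ultimately have "m\<^sup>2 < 2 * \<gamma>" "m\<^sup>2 < 2 * (\<alpha> * \<beta>)" by linarith+
  then obtain R C where "\<And>r. r > R \<Longrightarrow> 1 - f r < C * exp (- m * r)"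
    using one_minus_f_exp_bound[OF \<open>0 < m\<close>] by blast
  then have "\<bar>f r - 1\<bar> \<le> C * \<bar>exp (- m * r)\<bar>" if "r > max R 0" for r
    using f_bounds[of r] that by force
  then show ?thesis by (rule bigo_at_top_of_bound)
qed

text \<open>For \<open>\<gamma> = 0\<close> the \<open>f\<close>-equation reads \<open>(r\<^sup>2 f')' = \<beta> f u\<^sup>2\<close>, whose right-hand side decays
  exponentially; so the flux \<open>r\<^sup>2 f'\<close> stays bounded.\<close>
lemma flux_bounded:
  assumes "\<gamma> = 0"
  obtains M R where "R > 0" "\<And>r. r \<ge> R \<Longrightarrow> r\<^sup>2 * f' r \<le> M"
proof -
  define k where "k = sqrt (\<alpha> * \<beta> / 2) / 2"
  have "0 < k" "k < sqrt (\<alpha> * \<beta> / 2)" using \<alpha>_pos \<beta>_pos by (auto simp: k_def)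
  then obtain B R where "R > 0" "B \<ge> 0" and u2: "\<And>r. r \<ge> R \<Longrightarrow> (u r)\<^sup>2 \<le> B * exp (- (2 * k) * r)"
    using u_sq_exp_bound by metis
  define Q where "Q r = r\<^sup>2 * f' r + \<beta> * B / (2 * k) * exp (- (2 * k) * r)" for r
  have "Q s \<le> Q R" if "s \<ge> R" for s
  proof (rule DERIV_nonpos_imp_nonincreasing[OF that])
    fix t assume "R \<le> t" "t \<le> s"
    then have "t > 0" using \<open>R > 0\<close> by simp
    have "((\<lambda>r. r\<^sup>2 * f' r) has_real_derivative 2 * t * f' t + t\<^sup>2 * f'' t) (at t)"
      by (rule derivative_eq_intros f'_deriv[OF \<open>t > 0\<close>] refl | simp)+
    also have "2 * t * f' t + t\<^sup>2 * f'' t = \<beta> * f t * (u t)\<^sup>2"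
      using f_ode[OF \<open>t > 0\<close>] \<open>t > 0\<close> assms by (simp add: field_simps power2_eq_square)
    finally have "(Q has_real_derivative \<beta> * f t * (u t)\<^sup>2 + \<beta> * B / (2 * k) * (exp (- (2 * k) * t) * - (2 * k))) (at t)"
      unfolding Q_def[abs_def] by (rule DERIV_add) (auto intro!: derivative_eq_intros)
    moreover have "\<beta> * B / (2 * k) * (exp (- (2 * k) * t) * - (2 * k)) = - (\<beta> * B * exp (- (2 * k) * t))"
      using \<open>k > 0\<close> by simp
    moreover have "\<beta> * f t * (u t)\<^sup>2 \<le> \<beta> * 1 * (B * exp (- (2 * k) * t))"
      using \<beta>_pos f_bounds[OF \<open>t > 0\<close>] u2[of t] \<open>R \<le> t\<close> by (intro mult_mono mult_left_mono) auto
    ultimately show "\<exists>y. (Q has_real_derivative y) (at t) \<and> y \<le> 0"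
      by (intro exI[of _ "\<beta> * f t * (u t)\<^sup>2 - \<beta> * B * exp (- (2 * k) * t)"]) auto
  qed
  moreover have "r\<^sup>2 * f' r \<le> Q r" for r
    using \<beta>_pos \<open>B \<ge> 0\<close> \<open>k > 0\<close> by (simp add: Q_def)
  ultimately show thesis using \<open>R > 0\<close> by (intro that[of R "Q R"]) (auto intro: order_trans)
qed

lemma f_decay_gamma_0:
  assumes "\<gamma> = 0"
  shows "(\<lambda>r. f r - 1) \<in> O[at_top](\<lambda>r. 1 / r)"
proof -
  obtain M R where "R > 0" and flux: "\<And>r. r \<ge> R \<Longrightarrow> r\<^sup>2 * f' r \<le> M"
    using flux_bounded[OF assms] by blast
  define h where "h r = (1 - f r) - M / r" for r
  have "h r \<le> h s" if "R \<le> r" "r \<le> s" for r s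
  proof (rule DERIV_nonneg_imp_nondecreasing[OF that(2)])
    fix t assume "r \<le> t" "t \<le> s"
    then have "t > 0" "t \<ge> R" using \<open>R > 0\<close> that by auto
    have "(h has_real_derivative (M - t\<^sup>2 * f' t) / t\<^sup>2) (at t)"
      unfolding h_def[abs_def] using \<open>t > 0\<close>
      by (auto intro!: derivative_eq_intros f_deriv simp: field_simps power2_eq_square)
    moreover have "(M - t\<^sup>2 * f' t) / t\<^sup>2 \<ge> 0" using flux[OF \<open>t \<ge> R\<close>] by simp
    ultimately show "\<exists>y. (h has_real_derivative y) (at t) \<and> y \<ge> 0" by blast
  qed
  moreover have "(h \<longlongrightarrow> 0) at_top"
  proof -
    have "((\<lambda>r. M / r) \<longlongrightarrow> 0) at_top" by real_asymp
    from tendsto_diff[OF tendsto_diff[OF tendsto_const[of 1] f_at_top] this]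
    show ?thesis by (simp add: h_def[abs_def])
  qed
  ultimately have h_nonpos: "h r \<le> 0" if "r \<ge> R" for r
    using that by (intro tendsto_lowerbound[of h 0 at_top]) (auto simp: eventually_at_top_linorder)
  have "\<bar>f r - 1\<bar> \<le> \<bar>M\<bar> * \<bar>1 / r\<bar>" if "r > R" for r
  proof -
    have "1 - f r \<le> M / r" using h_nonpos[of r] that by (simp add: h_def)
    also have "\<dots> \<le> \<bar>M\<bar> / r" using that \<open>R > 0\<close> by (intro divide_right_mono) auto
    finally show ?thesis using f_bounds[of r] that \<open>R > 0\<close> by simp
  qed
  then show ?thesis by (rule bigo_at_top_of_bound)
qed

lemma minus_u''_lower_bound:
  assumes "s > 0"
  shows "u s * (1 + u s) * ((1 - u s) / s\<^sup>2) - \<alpha> * \<beta> / 2 \<le> - u'' s"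
proof -
  have "(f s)\<^sup>2 * u s \<le> 1"
    using u_bounds[OF assms] f_bounds[OF assms] mult_strict_mono[of "(f s)\<^sup>2" 1 "u s" 1]
    by (auto simp: abs_square_less_1)
  then have "\<alpha> * \<beta> / 2 * ((f s)\<^sup>2 * u s) \<le> \<alpha> * \<beta> / 2 * 1"
    using \<alpha>_pos \<beta>_pos by (intro mult_left_mono) auto
  moreover have "- u'' s = - (\<alpha> * \<beta> / 2 * ((f s)\<^sup>2 * u s)) + u s * (1 + u s) * ((1 - u s) / s\<^sup>2)"
    using u_ode[OF assms] by (simp add: algebra_simps power2_eq_square diff_divide_distrib)
  ultimately show ?thesis by linarith
qed

lemma one_minus_u_powr_bound:
  assumes "0 < p" "p < 2"
  obtains R C where "R > 0" "\<And>r. 0 < r \<Longrightarrow> r < R \<Longrightarrow> 1 - u r < C * r powr p"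
proof -
  define \<theta> where "\<theta> = 2 - p * (p - 1)"
  have "(p - 2) * (p + 1) < 0" using assms by (intro mult_neg_pos) auto
  then have "\<theta> > 0" by (simp add: \<theta>_def algebra_simps)
  have "((\<lambda>r. u r * (1 + u r)) \<longlongrightarrow> 1 * (1 + 1)) (at_right 0)"
    by (intro tendsto_intros u_at_0)
  moreover have "p * (p - 1) + \<theta> / 2 < 1 * (1 + 1)" using \<open>\<theta> > 0\<close> by (simp add: \<theta>_def field_simps)
  ultimately have "eventually (\<lambda>r. u r * (1 + u r) > p * (p - 1) + \<theta> / 2) (at_right 0)"
    by (rule order_tendstoD(1))
  then obtain R0 where "R0 > 0" and R0: "\<And>r. 0 < r \<Longrightarrow> r < R0 \<Longrightarrow> u r * (1 + u r) > p * (p - 1) + \<theta> / 2"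
    by (auto simp: eventually_at_right_field)
  define R where "R = R0 / 2"
  have "R > 0" and R: "\<And>r. 0 < r \<Longrightarrow> r \<le> R \<Longrightarrow> u r * (1 + u r) > p * (p - 1) + \<theta> / 2"
    using R0 \<open>R0 > 0\<close> by (auto simp: R_def)
  define K where "K = (\<alpha> * \<beta> / 2 + 1) * (2 / \<theta>)"
  define C where "C = max (2 / R powr p) (K / R powr (p - 2))"
  have C: "2 / R powr p \<le> C" "K / R powr (p - 2) \<le> C" by (auto simp: C_def)
  then have "C * R powr p \<ge> 2" "K \<le> C * R powr (p - 2)"
    using \<open>R > 0\<close> by (simp_all add: pos_divide_le_eq)
  from mult_right_mono[OF this(2), of "\<theta> / 2"]
  have "C * R powr (p - 2) * (\<theta> / 2) \<ge> \<alpha> * \<beta> / 2 + 1" using \<open>\<theta> > 0\<close> by (simp add: K_def)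
  have "C > 0" using C(1) \<open>R > 0\<close> by (smt (verit) divide_pos_pos powr_gt_zero)
  have "1 - u r < C * r powr p" if "0 < r" "r < R" for r
  proof (rule powr_barrier_at_0[OF \<open>p > 0\<close> \<open>R > 0\<close>, where w' = "\<lambda>r. - u' r" and w'' = "\<lambda>r. - u'' r"])
    show "((\<lambda>r. 1 - u r) \<longlongrightarrow> 0) (at_right 0)" using tendsto_diff[OF tendsto_const[of 1] u_at_0] by simp
    show "1 - u R < C * R powr p" using u_bounds[OF \<open>R > 0\<close>] \<open>C * R powr p \<ge> 2\<close> by simp
    fix s assume s: "0 < s" "s < R" and above: "1 - u s \<ge> C * s powr p"
    define Z where "Z = C * s powr (p - 2)"
    have "Z \<ge> 0" using \<open>C > 0\<close> by (simp add: Z_def)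
    have "C * R powr (p - 2) * (\<theta> / 2) \<le> Z * (\<theta> / 2)"
      using powr_mono2'[of "p - 2" s R] s assms \<open>C > 0\<close> \<open>\<theta> > 0\<close>
      unfolding Z_def by (intro mult_right_mono mult_left_mono) auto
    moreover have "(1 - u s) / s\<^sup>2 \<ge> Z"
      using above powr_eq_sq_mult_powr[OF s(1), of p] s by (simp add: Z_def field_simps)
    then have "u s * (1 + u s) * ((1 - u s) / s\<^sup>2) \<ge> (p * (p - 1) + \<theta> / 2) * Z"
      using R[of s] s u_bounds[of s] \<open>Z \<ge> 0\<close> by (intro mult_mono) auto
    moreover have "(p * (p - 1) + \<theta> / 2) * Z = C * p * (p - 1) * s powr (p - 2) + Z * (\<theta> / 2)"
      by (simp add: Z_def algebra_simps)
    ultimately show "- u'' s > C * p * (p - 1) * s powr (p - 2)"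
      using minus_u''_lower_bound[OF s(1)] \<open>C * R powr (p - 2) * (\<theta> / 2) \<ge> _\<close> by linarith
  qed (use that u_deriv u'_deriv in \<open>auto intro!: derivative_eq_intros\<close>)
  with \<open>R > 0\<close> show thesis by (rule that)
qed

lemma u_near_0:
  assumes "0 < p" "p < 2"
  shows "(\<lambda>r. u r - 1) \<in> O[at_right 0](\<lambda>r. r powr p)"
proof -
  obtain R C where "R > 0" "\<And>r. 0 < r \<Longrightarrow> r < R \<Longrightarrow> 1 - u r < C * r powr p"
    using one_minus_u_powr_bound[OF assms] by blast
  then have "\<bar>u r - 1\<bar> \<le> C * \<bar>r powr p\<bar>" if "0 < r" "r < R" for r
    using that u_bounds[of r] by force
  with \<open>R > 0\<close> show ?thesis by (rule bigo_at_right_0_of_bound)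
qed

lemma f''_lower_bound:
  assumes "s > 0"
  shows "- 2 / s * f' s + f s * (\<beta> / s\<^sup>2 * (u s)\<^sup>2 - \<gamma>) \<le> f'' s"
proof -
  have "f'' s = - 2 / s * f' s + f s * (\<beta> / s\<^sup>2 * (u s)\<^sup>2 - \<gamma>) + \<gamma> * f s ^ 3"
    using f_ode[OF assms] by (simp add: algebra_simps power2_eq_square power3_eq_cube)
  moreover have "\<gamma> * f s ^ 3 \<ge> 0" using \<gamma>_nonneg f_bounds[OF assms] by simp
  ultimately show ?thesis by linarith
qed

lemma f_powr_bound:
  assumes "0 < q" "q * (q + 1) < \<beta>"
  obtains R C where "R > 0" "\<And>r. 0 < r \<Longrightarrow> r < R \<Longrightarrow> f r < C * r powr q"
proof -
  define \<theta> where "\<theta> = \<beta> - q * (q + 1)"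
  have "\<theta> > 0" using assms by (simp add: \<theta>_def)
  have "((\<lambda>r. \<beta> * (u r)\<^sup>2 - \<gamma> * r\<^sup>2) \<longlongrightarrow> \<beta> * 1\<^sup>2 - \<gamma> * 0\<^sup>2) (at_right 0)"
    by (intro tendsto_intros u_at_0)
  moreover have "q * (q + 1) + \<theta> / 2 < \<beta> * 1\<^sup>2 - \<gamma> * 0\<^sup>2" using \<open>\<theta> > 0\<close> by (simp add: \<theta>_def field_simps)
  ultimately have "eventually (\<lambda>r. \<beta> * (u r)\<^sup>2 - \<gamma> * r\<^sup>2 > q * (q + 1) + \<theta> / 2) (at_right 0)"
    by (rule order_tendstoD(1))
  then obtain R0 where "R0 > 0" and R0: "\<And>r. 0 < r \<Longrightarrow> r < R0 \<Longrightarrow> \<beta> * (u r)\<^sup>2 - \<gamma> * r\<^sup>2 > q * (q + 1) + \<theta> / 2"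
    by (auto simp: eventually_at_right_field)
  define R where "R = R0 / 2"
  have "R > 0" and R: "\<And>r. 0 < r \<Longrightarrow> r \<le> R \<Longrightarrow> \<beta> * (u r)\<^sup>2 - \<gamma> * r\<^sup>2 > q * (q + 1) + \<theta> / 2"
    using R0 \<open>R0 > 0\<close> by (auto simp: R_def)
  define C where "C = 2 / R powr q"
  have "C > 0" "C * R powr q = 2" using \<open>R > 0\<close> by (auto simp: C_def)
  have "f r < C * r powr q" if "0 < r" "r < R" for r
  proof (rule powr_barrier_at_0[OF \<open>q > 0\<close> \<open>R > 0\<close>, where w' = f' and w'' = f''])
    show "f R < C * R powr q" using f_bounds[OF \<open>R > 0\<close>] \<open>C * R powr q = 2\<close> by simp
    fix s assume s: "0 < s" "s < R" and above: "f s \<ge> C * s powr q"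
      and slope: "f' s = C * q * s powr (q - 1)"
    define Z where "Z = C * s powr (q - 2)"
    have "Z > 0" using \<open>C > 0\<close> s by (simp add: Z_def)
    have "s powr (q - 1) = s * s powr (q - 2)" using powr_add[of s "q - 2" 1] s by simp
    then have "- 2 / s * f' s = - 2 * q * Z" using slope s by (simp add: Z_def)
    define X where "X = \<beta> / s\<^sup>2 * (u s)\<^sup>2 - \<gamma>"
    have "s\<^sup>2 * X = \<beta> * (u s)\<^sup>2 - \<gamma> * s\<^sup>2" using s by (simp add: X_def field_simps)
    then have sX: "s\<^sup>2 * X \<ge> q * (q + 1) + \<theta> / 2" using R[of s] s by simp
    moreover have "q * (q + 1) + \<theta> / 2 > 0" using \<open>q > 0\<close> \<open>\<theta> > 0\<close> by (simp add: add_pos_pos)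
    ultimately have "0 < s\<^sup>2 * X" by linarith
    then have "X \<ge> 0" using zero_le_power2[of s] by (auto simp: zero_less_mult_iff)
    then have "f s * X \<ge> s\<^sup>2 * Z * X"
      using above powr_eq_sq_mult_powr[OF s(1), of q]
      by (intro mult_right_mono) (auto simp: Z_def mult.left_commute)
    moreover have "s\<^sup>2 * Z * X \<ge> Z * (q * (q + 1) + \<theta> / 2)"
      using mult_left_mono[OF sX, of Z] \<open>Z > 0\<close> by (simp add: algebra_simps)
    moreover have "Z * (q * (q + 1) + \<theta> / 2) = C * q * (q - 1) * s powr (q - 2) + 2 * q * Z + Z * (\<theta> / 2)"
      by (simp add: Z_def algebra_simps)
    moreover have "Z * (\<theta> / 2) > 0" using \<open>Z > 0\<close> \<open>\<theta> > 0\<close> by simp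
    ultimately show "f'' s > C * q * (q - 1) * s powr (q - 2)"
      using f''_lower_bound[OF s(1)] \<open>- 2 / s * f' s = - 2 * q * Z\<close> unfolding X_def by linarith
  qed (use that f_at_0 f_deriv f'_deriv in auto)
  with \<open>R > 0\<close> show thesis by (rule that)
qed

lemma f_near_0:
  assumes "0 < q" "q < sqrt (1 / 4 + \<beta>) - 1 / 2"
  shows "f \<in> O[at_right 0](\<lambda>r. r powr q)"
proof -
  have "(q + 1 / 2)\<^sup>2 < (sqrt (1 / 4 + \<beta>))\<^sup>2" using assms by (intro power_strict_mono) auto
  then have "q * (q + 1) < \<beta>" using \<beta>_pos by (simp add: power2_eq_square algebra_simps)
  then obtain R C where "R > 0" "\<And>r. 0 < r \<Longrightarrow> r < R \<Longrightarrow> f r < C * r powr q"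
    using f_powr_bound[OF \<open>0 < q\<close>] by blast
  then have "\<bar>f r\<bar> \<le> C * \<bar>r powr q\<bar>" if "0 < r" "r < R" for r
    using that f_bounds[of r] by force
  with \<open>R > 0\<close> show ?thesis by (rule bigo_at_right_0_of_bound)
qed

end

theorem lemma3p3:
  fixes \<alpha> \<beta> \<gamma> :: real and u f :: "real \<Rightarrow> real"
  assumes "\<alpha> > 0" and "\<beta> > 0" and "\<gamma> \<ge> 0"
    and X: "admissible \<alpha> \<beta> \<gamma> u f"
    and minimizer: "\<And>v g. admissible \<alpha> \<beta> \<gamma> v g \<Longrightarrow> energy \<alpha> \<beta> \<gamma> u f \<le> energy \<alpha> \<beta> \<gamma> v g"
    and ode_u: "\<exists>u' u''. \<forall>r>0. (u has_real_derivative u' r) (at r) \<and>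
                   (u' has_real_derivative u'' r) (at r) \<and>
                   u'' r = \<alpha> * \<beta> / 2 * (f r)\<^sup>2 * u r + u r * ((u r)\<^sup>2 - 1) / r\<^sup>2"
    and ode_f: "\<exists>f' f''. \<forall>r>0. (f has_real_derivative f' r) (at r) \<and>
                   (f' has_real_derivative f'' r) (at r) \<and>
                   f'' r = - 2 / r * f' r + \<beta> / r\<^sup>2 * f r * (u r)\<^sup>2 + \<gamma> * f r * ((f r)\<^sup>2 - 1)"
  shows "(\<forall>r>0. 0 < u r \<and> u r < 1 \<and> 0 < f r \<and> f r < 1) \<and>
         (\<forall>\<epsilon>. 0 < \<epsilon> \<and> \<epsilon> < 1 \<longrightarrow>
            u \<in> O[at_top](\<lambda>r. exp (- sqrt (\<alpha> * \<beta> / 2) * (1 - \<epsilon>) * r)) \<and>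
            (\<gamma> > 0 \<longrightarrow> (\<lambda>r. f r - 1) \<in>
               O[at_top](\<lambda>r. exp (- sqrt 2 * min (sqrt \<gamma>) (sqrt (\<alpha> * \<beta>)) * (1 - \<epsilon>) * r))) \<and>
            (\<gamma> = 0 \<longrightarrow> (\<lambda>r. f r - 1) \<in> O[at_top](\<lambda>r. 1 / r)) \<and>
            (\<lambda>r. u r - 1) \<in> O[at_right 0](\<lambda>r. r powr (2 * (1 - \<epsilon>))) \<and>
            f \<in> O[at_right 0](\<lambda>r. r powr ((sqrt (1/4 + \<beta>) - 1/2) * (1 - \<epsilon>))))"
proof -
  obtain u' u'' where "\<forall>r>0. (u has_real_derivative u' r) (at r) \<and>
      (u' has_real_derivative u'' r) (at r) \<and>
      u'' r = \<alpha> * \<beta> / 2 * (f r)\<^sup>2 * u r + u r * ((u r)\<^sup>2 - 1) / r\<^sup>2"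
    using ode_u by blast
  moreover obtain f' f'' where "\<forall>r>0. (f has_real_derivative f' r) (at r) \<and>
      (f' has_real_derivative f'' r) (at r) \<and>
      f'' r = - 2 / r * f' r + \<beta> / r\<^sup>2 * f r * (u r)\<^sup>2 + \<gamma> * f r * ((f r)\<^sup>2 - 1)"
    using ode_f by blast
  ultimately interpret least_energy_solution \<alpha> \<beta> \<gamma> u u' u'' f f' f''
    using assms by unfold_locales auto
  show ?thesis
  proof (intro conjI allI impI)
    show "0 < u r" "u r < 1" "0 < f r" "f r < 1" if "r > 0" for r
      using u_bounds[OF that] f_bounds[OF that] by auto
    fix \<epsilon> :: real assume "0 < \<epsilon> \<and> \<epsilon> < 1"
    then have shrink: "0 < c * (1 - \<epsilon>)" "c * (1 - \<epsilon>) < c" if "c > 0" for c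
      using that by auto
    show "u \<in> O[at_top](\<lambda>r. exp (- sqrt (\<alpha> * \<beta> / 2) * (1 - \<epsilon>) * r))"
      using u_decay[OF shrink] \<alpha>_pos \<beta>_pos by simp
    show "(\<lambda>r. f r - 1) \<in> O[at_top](\<lambda>r. exp (- sqrt 2 * min (sqrt \<gamma>) (sqrt (\<alpha> * \<beta>)) * (1 - \<epsilon>) * r))"
      if "\<gamma> > 0"
      using f_decay[OF that shrink] that \<alpha>_pos \<beta>_pos by simp
    show "(\<lambda>r. f r - 1) \<in> O[at_top](\<lambda>r. 1 / r)" if "\<gamma> = 0" using f_decay_gamma_0[OF that] .
    show "(\<lambda>r. u r - 1) \<in> O[at_right 0](\<lambda>r. r powr (2 * (1 - \<epsilon>)))"
      using u_near_0[OF shrink] by simp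
    show "f \<in> O[at_right 0](\<lambda>r. r powr ((sqrt (1 / 4 + \<beta>) - 1 / 2) * (1 - \<epsilon>)))"
      using f_near_0[OF shrink] real_less_rsqrt[of "1 / 2" "1 / 4 + \<beta>"] \<beta>_pos by (simp add: power_divide)
  qed
qed

end
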